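(* Let $H:\mathbb R_+\to(0,1)$ be continuous and satisfy: (H1) there are constants $0<h_1<h_2<1$ with $h_1\le H_t\le h_2$ for all $t\ge0$; (H2) there are constants $D>0$, $\kappa\in(0,1]$ with $|H_t-H_s|\le D|t-s|^\kappa$ for all $t\ge s>0$. Let $Y$ be the multifractional Brownian motion with Hurst function $H$ and put $h_3=\min\{h_1,\kappa\}$. Then for any $\varepsilon>0$ and any $p>2$ there exists a nonnegative random variable $\eta=\eta(\varepsilon,p)$ such that almost surely, for all $0\le t_2<t_1\le t_2+1$, \[ |Y(t_1)-Y(t_2)|\le (t_1^{h_2+\varepsilon}\vee1)(t_1-t_2)^{h_3}\big(|\log(t_1-t_2)|^p\vee1\big)\eta, \] and there exist positive constants $C_1=C_1(\varepsilon,p)$, $C_2=C_2(\varepsilon,p)$ with $\mathbb P(\eta>u)\le C_1e^{-C_2u^2}$ for all $u>0$.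
   Context: The (harmonizable) multifractional Brownian motion with continuous functional parameter $H$ is $Y(t)=\int_{\mathbb R}\frac{e^{itu}-1}{|u|^{H_t+1/2}}\widetilde W(du)$, $t\ge0$, where $\widetilde W$ is the Fourier transform of real Gaussian white noise $W$, i.e. the unique complex-valued random measure with $\int_{\mathbb R}f(u)W(du)=\int_{\mathbb R}\widehat f(u)\widetilde W(du)$ a.s. for all $f\in L^2(\mathbb R)$. *)

theory Defs
  imports "HOL-Probability.Probability"
begin

text \<open>Covariance of the harmonizable multifractional Brownian motion
  Y(t) = int (e^{itu}-1)/|u|^{H_t+1/2} dW~(u), where W~ is the Fourier transform of
  real Gaussian white noise (Fourier convention hat f(u) = int e^{iux} f(x) dx, so that
  E |int g dW~|^2 = (1/(2 pi)) int |g|^2):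
  E[Y(t) Y(s)] = (1/(2 pi)) int Re((e^{itu}-1) conj(e^{isu}-1)) / |u|^{H_t+H_s+1} du.\<close>

definition mbm_cov :: "(real \<Rightarrow> real) \<Rightarrow> real \<Rightarrow> real \<Rightarrow> real" where
  "mbm_cov H t s =
     (1 / (2 * pi)) *
     (LINT u|lborel. Re ((cis (t * u) - 1) * cnj (cis (s * u) - 1)) / \<bar>u\<bar> powr (H t + H s + 1))"

text \<open>Y (indexed by t \<ge> 0) is a harmonizable mBm with functional parameter H on the
  probability space M: each Y t is a real random variable and the finite-dimensional
  distributions are centered jointly Gaussian with covariance mbm_cov H, expressed via
  the joint characteristic functions.\<close>

definition harmonizable_mbm :: "'a measure \<Rightarrow> (real \<Rightarrow> real) \<Rightarrow> (real \<Rightarrow> 'a \<Rightarrow> real) \<Rightarrow> bool" where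
  "harmonizable_mbm M H Y \<longleftrightarrow>
     prob_space M \<and>
     (\<forall>t\<ge>0. Y t \<in> borel_measurable M) \<and>
     (\<forall>(n::nat) (tt::nat \<Rightarrow> real) (a::nat \<Rightarrow> real). (\<forall>k<n. tt k \<ge> 0) \<longrightarrow>
        integral\<^sup>L M (\<lambda>\<omega>. cis (\<Sum>k<n. a k * Y (tt k) \<omega>)) =
        complex_of_real (exp (- (\<Sum>j<n. \<Sum>k<n. a j * a k * mbm_cov H (tt j) (tt k)) / 2)))"

end

(*
  The increment Y t - Y s is centred Gaussian, with variance (1 / 2 pi) times the squared
  L2 norm of mbm_kernel t (H t) - mbm_kernel s (H s). Splitting this difference into a change
  of time and a change of Hurst exponent, the latter controlled by |H t - H s| |ln u| and the
  Hoelder condition, gives Var (Y t - Y s) <= K max t 1 ^ (2 h2 + eps) (t - s) ^ (2 h3) for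
  t - s <= 1. Normalize the increment over each dyadic interval [j / 2^n, (j + 1) / 2^n] by
  max ((j + 1) / 2^n) 1 ^ (h2 + eps) 2^(-n h3) (n + 1): the Gaussian tails then still carry the
  factor max ((j + 1) / 2^n) 1 ^ eps (n + 1)^2 in the exponent, which makes them summable over
  n and j, so the supremum Z of the normalized increments has a Gaussian tail by the union
  bound. Chaining along the dyadic approximations of t1 and t2 bounds |Y t1 - Y t2| by a
  constant times Z times the weight of the level n with 2^-(n+1) < t1 - t2 <= 2^-n, whose
  factor n + 1 is of the order of |ln (t1 - t2)|.
*)

theory Submission
  imports Defs "HOL-Real_Asymp.Real_Asymp"
begin

section \<open>Gaussian tails\<close>

lemma std_normal_density_mult_exp:
  "std_normal_density y * exp ((y\<^sup>2 - c\<^sup>2) / 4) = sqrt 2 * exp (- c\<^sup>2 / 4) * normal_density 0 (sqrt 2) y"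
proof -
  have "sqrt (4 * pi) = sqrt 2 * sqrt (2 * pi)" by (simp add: real_sqrt_mult[symmetric])
  then have normal2: "sqrt 2 * normal_density 0 (sqrt 2) y = exp (- y\<^sup>2 / 4) / sqrt (2 * pi)"
    unfolding normal_density_def by simp
  have "sqrt 2 * exp (- c\<^sup>2 / 4) * normal_density 0 (sqrt 2) y
      = (sqrt 2 * normal_density 0 (sqrt 2) y) * exp (- c\<^sup>2 / 4)"
    by (simp only: ac_simps)
  also have "\<dots> = exp (- y\<^sup>2 / 4) * exp (- c\<^sup>2 / 4) / sqrt (2 * pi)"
    by (simp only: normal2 times_divide_eq_left)
  also have "\<dots> = std_normal_density y * exp ((y\<^sup>2 - c\<^sup>2) / 4)"
    unfolding std_normal_density_def by (simp add: exp_add[symmetric] field_simps)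
  finally show ?thesis ..
qed

lemma std_normal_tail_le:
  fixes c :: real
  assumes c: "0 \<le> c"
  shows "measure std_normal_distribution {y. c < \<bar>y\<bar>} \<le> sqrt 2 * exp (- c\<^sup>2 / 4)"
proof -
  have "emeasure std_normal_distribution {y. c < \<bar>y\<bar>}
      = (\<integral>\<^sup>+ y. ennreal (std_normal_density y) * indicator {y. c < \<bar>y\<bar>} y \<partial>lborel)"
    by (subst emeasure_density) auto
  also have "\<dots> \<le> (\<integral>\<^sup>+ y. ennreal (sqrt 2 * exp (- c\<^sup>2 / 4) * normal_density 0 (sqrt 2) y) \<partial>lborel)"
  proof (rule nn_integral_mono)
    fix y
    show "ennreal (std_normal_density y) * indicator {y. c < \<bar>y\<bar>} y
        \<le> ennreal (sqrt 2 * exp (- c\<^sup>2 / 4) * normal_density 0 (sqrt 2) y)"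
    proof (cases "c < \<bar>y\<bar>")
      case True
      then have "c\<^sup>2 \<le> y\<^sup>2" using c by (metis abs_le_square_iff abs_of_nonneg less_imp_le)
      then have "std_normal_density y \<le> std_normal_density y * exp ((y\<^sup>2 - c\<^sup>2) / 4)"
        using mult_left_mono[of 1 "exp ((y\<^sup>2 - c\<^sup>2) / 4)" "std_normal_density y"] by simp
      then show ?thesis using True std_normal_density_mult_exp[of y c] by (simp add: indicator_def)
    qed (simp add: indicator_def)
  qed
  also have "\<dots> = ennreal (sqrt 2 * exp (- c\<^sup>2 / 4)) * (\<integral>\<^sup>+ y. ennreal (normal_density 0 (sqrt 2) y) \<partial>lborel)"
    by (subst nn_integral_cmult[symmetric]) (auto simp: ennreal_mult)
  also have "(\<integral>\<^sup>+ y. ennreal (normal_density 0 (sqrt 2) y) \<partial>lborel) = 1"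
    by (subst nn_integral_eq_integral) auto
  finally show ?thesis unfolding measure_def by (simp add: enn2real_leI)
qed

lemma (in prob_space) distr_eq_scaled_std_normal:
  assumes [measurable]: "X \<in> borel_measurable M"
    and char: "\<And>\<theta>. (\<integral>\<omega>. cis (\<theta> * X \<omega>) \<partial>M) = complex_of_real (exp (- (\<theta>\<^sup>2 * v) / 2))"
  shows "0 \<le> v" and "distr M borel X = distr std_normal_distribution borel (\<lambda>y. sqrt v * y)"
proof -
  have "norm (\<integral>\<omega>. cis (1 * X \<omega>) \<partial>M) \<le> (\<integral>\<omega>. norm (cis (1 * X \<omega>)) \<partial>M)"
    by (rule integral_norm_bound)
  then show "0 \<le> v" using char[of 1] by (simp add: prob_space)
  let ?N = std_normal_distribution
  interpret N: real_distribution ?N by (rule real_dist_normal_dist)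
  show "distr M borel X = distr ?N borel (\<lambda>y. sqrt v * y)"
  proof (rule Levy_uniqueness)
    show "real_distribution (distr ?N borel (\<lambda>y. sqrt v * y))" by (intro N.real_distribution_distr) simp
    show "char (distr M borel X) = char (distr ?N borel (\<lambda>y. sqrt v * y))"
    proof
      fix \<theta>
      have "char (distr M borel X) \<theta> = (\<integral>\<omega>. cis (\<theta> * X \<omega>) \<partial>M)"
        unfolding char_def by (simp add: integral_distr cis_conv_exp)
      also have "\<dots> = complex_of_real (exp (- ((\<theta> * sqrt v)\<^sup>2) / 2))"
        using \<open>0 \<le> v\<close> by (simp add: char power_mult_distrib)
      also have "\<dots> = char ?N (\<theta> * sqrt v)" by (simp add: char_std_normal_distribution)
      also have "\<dots> = char (distr ?N borel (\<lambda>y. sqrt v * y)) \<theta>"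
        unfolding char_def by (simp add: integral_distr ac_simps)
      finally show "char (distr M borel X) \<theta> = char (distr ?N borel (\<lambda>y. sqrt v * y)) \<theta>" .
    qed
  qed simp
qed

lemma (in prob_space) gaussian_tail_le:
  assumes [measurable]: "X \<in> borel_measurable M"
    and char: "\<And>\<theta>. (\<integral>\<omega>. cis (\<theta> * X \<omega>) \<partial>M) = complex_of_real (exp (- (\<theta>\<^sup>2 * v) / 2))"
    and x: "0 < x" and V: "v \<le> V" "0 < V"
  shows "prob {\<omega>\<in>space M. x < \<bar>X \<omega>\<bar>} \<le> 2 * exp (- x\<^sup>2 / (4 * V))"
proof -
  let ?N = std_normal_distribution
  define \<sigma> where "\<sigma> = sqrt v"
  have v: "0 \<le> v" by (rule distr_eq_scaled_std_normal(1)[OF _ char]) simp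
  have "prob {\<omega>\<in>space M. x < \<bar>X \<omega>\<bar>} = measure (distr M borel X) {y. x < \<bar>y\<bar>}"
    by (subst measure_distr) (auto intro!: arg_cong[where f="measure M"])
  also have "\<dots> = measure ?N {y. x < \<bar>\<sigma> * y\<bar>}"
    unfolding distr_eq_scaled_std_normal(2)[OF _ char, simplified] \<sigma>_def
    by (subst measure_distr) (auto intro!: arg_cong[where f="measure ?N"])
  also have "\<dots> \<le> 2 * exp (- x\<^sup>2 / (4 * V))"
  proof (cases "v = 0")
    case False
    then have "0 < \<sigma>" "\<sigma>\<^sup>2 = v" using v by (simp_all add: \<sigma>_def)
    have "{y. x < \<bar>\<sigma> * y\<bar>} = {y. x / \<sigma> < \<bar>y\<bar>}"
      using \<open>0 < \<sigma>\<close> by (auto simp: abs_mult field_simps)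
    then have "measure ?N {y. x < \<bar>\<sigma> * y\<bar>} \<le> sqrt 2 * exp (- (x / \<sigma>)\<^sup>2 / 4)"
      using std_normal_tail_le[of "x / \<sigma>"] x \<open>0 < \<sigma>\<close> by simp
    also have "\<dots> \<le> 2 * exp (- x\<^sup>2 / (4 * V))"
    proof (rule mult_mono)
      show "sqrt 2 \<le> (2::real)" by (rule real_le_lsqrt) auto
      have "x\<^sup>2 / V \<le> x\<^sup>2 / v" using V v False by (intro divide_left_mono) auto
      then show "exp (- (x / \<sigma>)\<^sup>2 / 4) \<le> exp (- x\<^sup>2 / (4 * V))"
        using \<open>\<sigma>\<^sup>2 = v\<close> by (simp add: power_divide)
    qed auto
    finally show ?thesis .
  qed (use x in \<open>simp add: \<sigma>_def\<close>)
  finally show ?thesis .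
qed

section \<open>The variance of the increments\<close>

definition trunc_sq :: "real \<Rightarrow> real" where
  "trunc_sq y = (min 2 \<bar>y\<bar>)\<^sup>2"

lemma trunc_sq_nonneg: "0 \<le> trunc_sq y"
  by (simp add: trunc_sq_def)

lemma trunc_sq_abs: "trunc_sq \<bar>y\<bar> = trunc_sq y"
  by (simp add: trunc_sq_def)

lemma trunc_sq_le_4: "trunc_sq y \<le> 4"
  unfolding trunc_sq_def using power_mono[of "min 2 \<bar>y\<bar>" 2 2] by simp

lemma trunc_sq_eq_square: "\<bar>y\<bar> \<le> 2 \<Longrightarrow> trunc_sq y = y\<^sup>2"
  by (simp add: trunc_sq_def min_def)

lemma borel_measurable_trunc_sq [measurable]: "trunc_sq \<in> borel_measurable borel"
  unfolding trunc_sq_def by measurable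

lemma norm_cis_minus_one_le: "cmod (cis \<theta> - 1) \<le> min 2 \<bar>\<theta>\<bar>"
proof -
  have "cmod (cis \<theta> - 1) \<le> cmod (cis \<theta>) + cmod 1" by (rule norm_triangle_ineq4)
  moreover have "cmod (cis \<theta> - 1) \<le> \<bar>\<theta>\<bar>"
    using iexp_approx1[of \<theta> 0] by (simp add: cis_conv_exp)
  ultimately show ?thesis by simp
qed

lemma norm_cis_minus_one_sq_le: "(cmod (cis \<theta> - 1))\<^sup>2 \<le> trunc_sq \<theta>"
  unfolding trunc_sq_def by (intro power_mono norm_cis_minus_one_le) simp

lemma abs_exp_diff_le:
  fixes p q :: real
  shows "\<bar>exp p - exp q\<bar> \<le> \<bar>p - q\<bar> * (exp p + exp q)"
proof -
  have *: "exp b - exp a \<le> (b - a) * (exp a + exp b)" if "a \<le> b" for a b :: real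
  proof -
    have "exp b * (1 + (a - b)) \<le> exp b * exp (a - b)"
      using exp_ge_add_one_self[of "a - b"] by simp
    then have "exp b - exp a \<le> (b - a) * exp b" by (simp add: exp_diff algebra_simps)
    also have "\<dots> \<le> (b - a) * (exp a + exp b)" using that by (intro mult_left_mono) auto
    finally show ?thesis .
  qed
  show ?thesis
    using *[of p q] *[of q p] by (cases "p \<le> q") (simp_all add: abs_if add.commute)
qed

lemma abs_ln_le_powr:
  fixes x e :: real
  assumes "0 < x" "0 < e"
  shows "\<bar>ln x\<bar> \<le> (x powr e + x powr (- e)) / e"
proof -
  have "e * ln x \<le> x powr e" "- e * ln x \<le> x powr (- e)"
    using ln_le_minus_one[of "x powr e"] ln_le_minus_one[of "x powr (- e)"] assms by simp_all
  moreover have "0 \<le> x powr e" "0 \<le> x powr (- e)" by simp_all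
  ultimately have "\<bar>e * ln x\<bar> \<le> x powr e + x powr (- e)"
    unfolding abs_le_iff by linarith
  then have "e * \<bar>ln x\<bar> \<le> x powr e + x powr (- e)" using assms by (simp add: abs_mult)
  then show ?thesis using assms by (simp add: field_simps)
qed

lemma square_add_le: "(p + q)\<^sup>2 \<le> 2 * p\<^sup>2 + 2 * (q::real)\<^sup>2"
  using zero_le_power2[of "p - q"] by (simp add: power2_eq_square algebra_simps)

lemma nn_integral_abs_le:
  fixes f :: "real \<Rightarrow> ennreal"
  assumes [measurable]: "f \<in> borel_measurable borel"
  shows "(\<integral>\<^sup>+x. f \<bar>x\<bar> \<partial>lborel) \<le> 2 * (\<integral>\<^sup>+x. f x * indicator {0..} x \<partial>lborel)"
proof -
  have "(\<integral>\<^sup>+x. f \<bar>x\<bar> \<partial>lborel) \<le> (\<integral>\<^sup>+x. f x * indicator {0..} x + f (- x) * indicator {..0} x \<partial>lborel)"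
    by (intro nn_integral_mono) (auto simp: indicator_def abs_if)
  also have "\<dots> = (\<integral>\<^sup>+x. f x * indicator {0..} x \<partial>lborel) + (\<integral>\<^sup>+x. f (- x) * indicator {..0} x \<partial>lborel)"
    by (intro nn_integral_add) auto
  also have "(\<integral>\<^sup>+x. f (- x) * indicator {..0} x \<partial>lborel) = (\<integral>\<^sup>+x. f x * indicator {0..} x \<partial>lborel)"
    using nn_integral_real_affine[of "\<lambda>x. f x * indicator {0..} x" "-1" 0]
    by (simp add: indicator_def)
  finally show ?thesis by (simp add: mult_2)
qed

definition trunc_sq_powr_const :: "real \<Rightarrow> real \<Rightarrow> real" where
  "trunc_sq_powr_const c1 c2 = 2 / (2 - c2) + 8 / c1"

lemma trunc_sq_powr_const_pos: "0 < c1 \<Longrightarrow> c2 < 2 \<Longrightarrow> 0 < trunc_sq_powr_const c1 c2"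
  by (simp add: trunc_sq_powr_const_def add_pos_pos)

lemma trunc_sq_powr_le_split:
  fixes x c c1 c2 :: real
  assumes c: "0 < c1" "c1 \<le> c" "c \<le> c2"
  shows "ennreal (trunc_sq x * x powr (- (c + 1))) * indicator {0..} x
    \<le> ennreal (x powr (1 - c2)) * indicator {0..1} x + ennreal (4 * x powr (- (c1 + 1))) * indicator {1..} x"
proof (cases "0 < x")
  case x: True
  show ?thesis
  proof (cases "x \<le> 1")
    case True
    have "trunc_sq x * x powr (- (c + 1)) = x powr 2 * x powr (- (c + 1))"
      using x True by (simp add: trunc_sq_eq_square powr_numeral)
    also have "\<dots> = x powr (1 - c)" by (simp add: powr_add[symmetric])
    also have "\<dots> \<le> x powr (1 - c2)" using x True c by (intro powr_mono') auto
    finally have "ennreal (trunc_sq x * x powr (- (c + 1))) * indicator {0..} x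
        \<le> ennreal (x powr (1 - c2)) * indicator {0..1} x"
      using x True by (simp add: indicator_def ennreal_leI)
    then show ?thesis by (rule order_trans) (rule add_increasing2; simp)
  next
    case False
    have "trunc_sq x * x powr (- (c + 1)) \<le> 4 * x powr (- (c1 + 1))"
      using x False c by (intro mult_mono trunc_sq_le_4 powr_mono) auto
    then show ?thesis using x False by (simp add: indicator_def ennreal_leI)
  qed
qed (cases "x = 0"; simp add: indicator_def)

lemma nn_integral_trunc_sq_powr_le:
  assumes c: "0 < c1" "c1 \<le> c" "c \<le> c2" "c2 < 2"
  shows "(\<integral>\<^sup>+x. ennreal (trunc_sq x * \<bar>x\<bar> powr (- (c + 1))) \<partial>lborel) \<le> ennreal (trunc_sq_powr_const c1 c2)"
proof -
  have "(\<integral>\<^sup>+x. ennreal (trunc_sq x * \<bar>x\<bar> powr (- (c + 1))) \<partial>lborel)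
      \<le> 2 * (\<integral>\<^sup>+x. ennreal (trunc_sq x * x powr (- (c + 1))) * indicator {0..} x \<partial>lborel)"
    using nn_integral_abs_le[of "\<lambda>x. ennreal (trunc_sq x * x powr (- (c + 1)))"] by (simp add: trunc_sq_abs)
  also have "\<dots> \<le> 2 * ((\<integral>\<^sup>+x. ennreal (x powr (1 - c2)) * indicator {0..1} x \<partial>lborel)
                    + (\<integral>\<^sup>+x. ennreal (4 * x powr (- (c1 + 1))) * indicator {1..} x \<partial>lborel))"
    using trunc_sq_powr_le_split[OF c(1-3)]
    by (subst nn_integral_add[symmetric]) (auto intro!: mult_left_mono nn_integral_mono)
  also have "(\<integral>\<^sup>+x. ennreal (x powr (1 - c2)) * indicator {0..1} x \<partial>lborel) = ennreal (1 / (2 - c2))"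
  proof -
    have "((\<lambda>x. x powr (1 - c2)) has_integral (1 powr (1 - c2 + 1) / (1 - c2 + 1))) {0..1}"
      using c by (intro has_integral_powr_from_0) auto
    then show ?thesis by (intro nn_integral_has_integral_lebesgue') auto
  qed
  also have "(\<integral>\<^sup>+x. ennreal (4 * x powr (- (c1 + 1))) * indicator {1..} x \<partial>lborel) = ennreal (4 / c1)"
  proof -
    have "((\<lambda>x. x powr (- (c1 + 1))) has_integral (- (1 powr (- (c1 + 1) + 1)) / (- (c1 + 1) + 1))) {1..}"
      using c by (intro has_integral_powr_to_inf) auto
    then have "((\<lambda>x. x powr (- (c1 + 1))) has_integral (1 / c1)) {1..}" by simp
    then have "((\<lambda>x. 4 * x powr (- (c1 + 1))) has_integral (4 * (1 / c1))) {1..}"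
      by (rule has_integral_mult_right)
    then show ?thesis by (intro nn_integral_has_integral_lebesgue') auto
  qed
  also have "2 * (ennreal (1 / (2 - c2)) + ennreal (4 / c1)) = ennreal (trunc_sq_powr_const c1 c2)"
  proof -
    have "ennreal (trunc_sq_powr_const c1 c2) = ennreal 2 * ennreal (1 / (2 - c2) + 4 / c1)"
      unfolding trunc_sq_powr_const_def using c by (subst ennreal_mult[symmetric]) (auto simp: field_simps)
    then show ?thesis using c by (simp add: ennreal_plus)
  qed
  finally show ?thesis .
qed

lemma nn_integral_trunc_sq_scaled_le:
  assumes c: "0 < c1" "c1 \<le> c" "c \<le> c2" "c2 < 2" and \<delta>: "0 \<le> \<delta>"
  shows "(\<integral>\<^sup>+u. ennreal (trunc_sq (\<delta> * u) * \<bar>u\<bar> powr (- (c + 1))) \<partial>lborel)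
    \<le> ennreal (trunc_sq_powr_const c1 c2 * \<delta> powr c)"
proof (cases "\<delta> = 0")
  case True
  then show ?thesis by (simp add: trunc_sq_def)
next
  case False
  then have "0 < \<delta>" using \<delta> by simp
  define G where "G x = ennreal (trunc_sq x * \<bar>x\<bar> powr (- (c + 1)))" for x
  have [measurable]: "G \<in> borel_measurable borel" unfolding G_def by measurable
  have scale: "ennreal (trunc_sq (\<delta> * u) * \<bar>u\<bar> powr (- (c + 1))) = ennreal (\<delta> powr c) * ennreal \<delta> * G (\<delta> * u)" for u
  proof -
    have "\<bar>u\<bar> powr (- (c + 1)) = \<delta> powr (c + 1) * \<bar>\<delta> * u\<bar> powr (- (c + 1))"
      using \<open>0 < \<delta>\<close> by (simp add: abs_mult powr_mult powr_add[symmetric])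
    then show ?thesis
      using \<open>0 < \<delta>\<close> trunc_sq_nonneg[of "\<delta> * u"]
      by (simp add: G_def powr_add ennreal_mult[symmetric] ac_simps)
  qed
  have "(\<integral>\<^sup>+u. ennreal (trunc_sq (\<delta> * u) * \<bar>u\<bar> powr (- (c + 1))) \<partial>lborel)
      = ennreal (\<delta> powr c) * (ennreal \<delta> * (\<integral>\<^sup>+u. G (0 + \<delta> * u) \<partial>lborel))"
    unfolding scale by (simp add: nn_integral_cmult mult.assoc)
  also have "ennreal \<delta> * (\<integral>\<^sup>+u. G (0 + \<delta> * u) \<partial>lborel) = (\<integral>\<^sup>+x. G x \<partial>lborel)"
    using nn_integral_real_affine[of G \<delta> 0] \<open>0 < \<delta>\<close> by simp
  also have "ennreal (\<delta> powr c) * (\<integral>\<^sup>+x. G x \<partial>lborel) \<le> ennreal (\<delta> powr c) * ennreal (trunc_sq_powr_const c1 c2)"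
    using nn_integral_trunc_sq_powr_le[OF c] unfolding G_def by (intro mult_left_mono) auto
  also have "\<dots> = ennreal (trunc_sq_powr_const c1 c2 * \<delta> powr c)"
    using trunc_sq_powr_const_pos[OF c(1,4)] by (simp add: ennreal_mult[symmetric] mult.commute)
  finally show ?thesis .
qed

lemma trunc_sq_scaled_integral:
  assumes c: "0 < c1" "c1 \<le> c" "c \<le> c2" "c2 < 2" and \<delta>: "0 \<le> \<delta>"
  shows integrable_trunc_sq_scaled: "integrable lborel (\<lambda>u. trunc_sq (\<delta> * u) * \<bar>u\<bar> powr (- (c + 1)))"
    and integral_trunc_sq_scaled_le:
      "(LINT u|lborel. trunc_sq (\<delta> * u) * \<bar>u\<bar> powr (- (c + 1))) \<le> trunc_sq_powr_const c1 c2 * \<delta> powr c"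
proof -
  have nonneg: "0 \<le> trunc_sq (\<delta> * u) * \<bar>u\<bar> powr (- (c + 1))" for u by (simp add: trunc_sq_nonneg)
  note bound = nn_integral_trunc_sq_scaled_le[OF c \<delta>]
  show "integrable lborel (\<lambda>u. trunc_sq (\<delta> * u) * \<bar>u\<bar> powr (- (c + 1)))"
    using bound nonneg by (intro integrableI_bounded) (auto simp: le_less_trans)
  show "(LINT u|lborel. trunc_sq (\<delta> * u) * \<bar>u\<bar> powr (- (c + 1))) \<le> trunc_sq_powr_const c1 c2 * \<delta> powr c"
    using bound nonneg trunc_sq_powr_const_pos[OF c(1,4)]
    by (subst integral_eq_nn_integral) (auto intro!: enn2real_leI)
qed

definition mbm_kernel :: "real \<Rightarrow> real \<Rightarrow> real \<Rightarrow> complex" where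
  "mbm_kernel t a u = (cis (t * u) - 1) * complex_of_real (\<bar>u\<bar> powr (- (a + 1/2)))"

lemma mbm_kernel_zero [simp]: "mbm_kernel t a 0 = 0"
  by (simp add: mbm_kernel_def)

lemma borel_measurable_mbm_kernel [measurable]: "mbm_kernel t a \<in> borel_measurable borel"
  unfolding mbm_kernel_def cis_conv_exp by measurable

lemma Re_mbm_kernel_product:
  "Re (mbm_kernel t a u * cnj (mbm_kernel s b u))
     = Re ((cis (t * u) - 1) * cnj (cis (s * u) - 1)) / \<bar>u\<bar> powr (a + b + 1)"
proof (cases "u = 0")
  case False
  have "a + b + 1 = (a + 1/2) + (b + 1/2)" by simp
  then have "\<bar>u\<bar> powr (a + b + 1) = \<bar>u\<bar> powr (a + 1/2) * \<bar>u\<bar> powr (b + 1/2)"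
    by (simp only: powr_add)
  then show ?thesis using False unfolding mbm_kernel_def powr_minus by (simp add: field_simps)
qed simp

lemma mbm_cov_eq_kernel:
  "mbm_cov H t s = 1 / (2 * pi) * (LINT u|lborel. Re (mbm_kernel t (H t) u * cnj (mbm_kernel s (H s) u)))"
  unfolding mbm_cov_def Re_mbm_kernel_product ..

lemma mbm_cov_sym: "mbm_cov H s t = mbm_cov H t s"
proof -
  have "Re (z * cnj w) = Re (w * cnj z)" for z w :: complex by (simp add: algebra_simps)
  then show ?thesis unfolding mbm_cov_eq_kernel by metis
qed

lemma abs_Re_mbm_kernel_product_le:
  assumes "0 \<le> t" "0 \<le> s"
  shows "\<bar>Re (mbm_kernel t a u * cnj (mbm_kernel s b u))\<bar> \<le> trunc_sq (max t s * u) * \<bar>u\<bar> powr (- (a + b + 1))"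
proof (cases "u = 0")
  case False
  have cis_le: "cmod (cis (r * u) - 1) \<le> min 2 (max t s * \<bar>u\<bar>)" if "0 \<le> r" "r \<le> max t s" for r
    using norm_cis_minus_one_le[of "r * u"] mult_right_mono[OF that(2), of "\<bar>u\<bar>"] that(1)
    by (auto simp: abs_mult)
  have "\<bar>Re ((cis (t * u) - 1) * cnj (cis (s * u) - 1))\<bar> \<le> cmod ((cis (t * u) - 1) * cnj (cis (s * u) - 1))"
    by (rule abs_Re_le_cmod)
  also have "\<dots> = cmod (cis (t * u) - 1) * cmod (cis (s * u) - 1)"
    by (simp only: norm_mult complex_mod_cnj)
  also have "\<dots> \<le> min 2 (max t s * \<bar>u\<bar>) * min 2 (max t s * \<bar>u\<bar>)"
    using assms by (intro mult_mono cis_le) auto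
  also have "\<dots> = trunc_sq (max t s * u)"
    using assms by (simp add: trunc_sq_def power2_eq_square abs_mult)
  finally show ?thesis
    unfolding Re_mbm_kernel_product powr_minus_divide by (simp add: abs_divide divide_right_mono)
qed (simp add: trunc_sq_def)

lemma integrable_mbm_kernel_product:
  assumes "0 \<le> t" "0 \<le> s" "0 < a + b" "a + b < 2"
  shows "integrable lborel (\<lambda>u. Re (mbm_kernel t a u * cnj (mbm_kernel s b u)))"
proof (rule Bochner_Integration.integrable_bound)
  show "integrable lborel (\<lambda>u. trunc_sq (max t s * u) * \<bar>u\<bar> powr (- ((a + b) + 1)))"
    using assms by (intro integrable_trunc_sq_scaled) auto
  show "AE u in lborel. norm (Re (mbm_kernel t a u * cnj (mbm_kernel s b u)))
      \<le> norm (trunc_sq (max t s * u) * \<bar>u\<bar> powr (- ((a + b) + 1)))"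
    using abs_Re_mbm_kernel_product_le[OF assms(1,2)] trunc_sq_nonneg by (simp add: add.assoc)
qed simp

lemma mbm_increment_variance_eq:
  assumes "0 \<le> t" "0 \<le> s" "0 < H t" "H t < 1" "0 < H s" "H s < 1"
  shows "mbm_cov H t t - 2 * mbm_cov H t s + mbm_cov H s s
           = 1 / (2 * pi) * (LINT u|lborel. (cmod (mbm_kernel t (H t) u - mbm_kernel s (H s) u))\<^sup>2)"
    and "integrable lborel (\<lambda>u. (cmod (mbm_kernel t (H t) u - mbm_kernel s (H s) u))\<^sup>2)"
proof -
  define P where "P x y u = Re (mbm_kernel x (H x) u * cnj (mbm_kernel y (H y) u))" for x y u
  have int: "integrable lborel (P x y)" if "x \<in> {s, t}" "y \<in> {s, t}" for x y
    unfolding P_def using assms that by (intro integrable_mbm_kernel_product) auto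
  have cov: "mbm_cov H x y = 1 / (2 * pi) * integral\<^sup>L lborel (P x y)" for x y
    unfolding P_def by (rule mbm_cov_eq_kernel)
  have sq: "(cmod (mbm_kernel t (H t) u - mbm_kernel s (H s) u))\<^sup>2 = P t t u - 2 * P t s u + P s s u" for u
    unfolding P_def cmod_power2 by (simp add: algebra_simps power2_eq_square)
  show "integrable lborel (\<lambda>u. (cmod (mbm_kernel t (H t) u - mbm_kernel s (H s) u))\<^sup>2)"
    unfolding sq using int by simp
  show "mbm_cov H t t - 2 * mbm_cov H t s + mbm_cov H s s
           = 1 / (2 * pi) * (LINT u|lborel. (cmod (mbm_kernel t (H t) u - mbm_kernel s (H s) u))\<^sup>2)"
    unfolding sq cov using int by (simp add: algebra_simps)
qed

text \<open>Changing the Hurst exponent costs a factor \<open>\<bar>ln u\<bar>\<close>, which is absorbed by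
  shifting the exponent by \<open>\<plusminus>e\<close>.\<close>

lemma powr_diff_sq_le:
  fixes X a b e :: real
  assumes X: "0 < X" and e: "0 < e"
  shows "(X powr (- (a + 1/2)) - X powr (- (b + 1/2)))\<^sup>2
    \<le> 4 / e\<^sup>2 * (a - b)\<^sup>2 * (X powr (- (2*a - 2*e + 1)) + X powr (- (2*a + 2*e + 1))
                            + X powr (- (2*b - 2*e + 1)) + X powr (- (2*b + 2*e + 1)))"
proof -
  define xa xb where "xa = X powr (- (a + 1/2))" and "xb = X powr (- (b + 1/2))"
  have sq_powr: "(X powr r)\<^sup>2 = X powr (2 * r)" for r by (simp add: power2_eq_square powr_add[symmetric])
  have "\<bar>xa - xb\<bar> \<le> \<bar>- (a + 1/2) * ln X - - (b + 1/2) * ln X\<bar> * (xa + xb)"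
    using abs_exp_diff_le X unfolding xa_def xb_def powr_def by simp
  also have "\<bar>- (a + 1/2) * ln X - - (b + 1/2) * ln X\<bar> = \<bar>a - b\<bar> * \<bar>ln X\<bar>"
    by (simp add: abs_mult[symmetric] algebra_simps)
  finally have "(xa - xb)\<^sup>2 \<le> (\<bar>a - b\<bar> * \<bar>ln X\<bar> * (xa + xb))\<^sup>2"
    using power_mono[of "\<bar>xa - xb\<bar>"] by (metis abs_ge_zero power2_abs)
  also have "\<dots> = (a - b)\<^sup>2 * (ln X)\<^sup>2 * (xa + xb)\<^sup>2" by (simp add: power_mult_distrib)
  also have "\<dots> \<le> (a - b)\<^sup>2 * (2 * (X powr (2 * e) + X powr (- 2 * e)) / e\<^sup>2) * (2 * xa\<^sup>2 + 2 * xb\<^sup>2)"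
  proof (intro mult_mono mult_left_mono square_add_le)
    have "\<bar>ln X\<bar>\<^sup>2 \<le> ((X powr e + X powr (- e)) / e)\<^sup>2"
      using abs_ln_le_powr[OF X e] by (intro power_mono) auto
    also have "\<dots> \<le> (2 * (X powr e)\<^sup>2 + 2 * (X powr (- e))\<^sup>2) / e\<^sup>2"
      by (simp add: power_divide divide_right_mono square_add_le)
    finally show "(ln X)\<^sup>2 \<le> 2 * (X powr (2 * e) + X powr (- 2 * e)) / e\<^sup>2"
      by (simp add: sq_powr algebra_simps)
  qed auto
  also have "\<dots> = 4 / e\<^sup>2 * (a - b)\<^sup>2 * ((X powr (2 * e) + X powr (- 2 * e)) * (xa\<^sup>2 + xb\<^sup>2))"
    by (simp add: field_simps)
  also have "(X powr (2 * e) + X powr (- 2 * e)) * (xa\<^sup>2 + xb\<^sup>2)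
      = X powr (- (2*a - 2*e + 1)) + X powr (- (2*a + 2*e + 1)) + X powr (- (2*b - 2*e + 1)) + X powr (- (2*b + 2*e + 1))"
  proof -
    have powr_mult_eq: "X powr p * X powr q = X powr r" if "p + q = r" for p q r
      using that by (simp add: powr_add[symmetric])
    have "X powr (2 * e) * X powr (2 * - (a + 1/2)) = X powr (- (2*a - 2*e + 1))"
      "X powr (- 2 * e) * X powr (2 * - (a + 1/2)) = X powr (- (2*a + 2*e + 1))"
      "X powr (2 * e) * X powr (2 * - (b + 1/2)) = X powr (- (2*b - 2*e + 1))"
      "X powr (- 2 * e) * X powr (2 * - (b + 1/2)) = X powr (- (2*b + 2*e + 1))"
      by (rule powr_mult_eq; simp)+
    then show ?thesis unfolding xa_def xb_def sq_powr distrib_left distrib_right by simp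
  qed
  finally show ?thesis by (simp add: xa_def xb_def)
qed

lemma norm_mbm_kernel_diff_sq_le:
  fixes a b e s t u :: real
  assumes st: "0 \<le> s" "s \<le> t" and e: "0 < e"
  shows "(cmod (mbm_kernel t a u - mbm_kernel s b u))\<^sup>2
    \<le> 2 * trunc_sq ((t - s) * u) * \<bar>u\<bar> powr (- (2*a + 1))
      + 8 / e\<^sup>2 * (a - b)\<^sup>2 * trunc_sq (s * u)
        * (\<bar>u\<bar> powr (- (2*a - 2*e + 1)) + \<bar>u\<bar> powr (- (2*a + 2*e + 1))
           + \<bar>u\<bar> powr (- (2*b - 2*e + 1)) + \<bar>u\<bar> powr (- (2*b + 2*e + 1)))"
proof (cases "u = 0")
  case False
  define xa xb where "xa = \<bar>u\<bar> powr (- (a + 1/2))" and "xb = \<bar>u\<bar> powr (- (b + 1/2))"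
  have xa0: "0 \<le> xa" by (simp add: xa_def)
  have "mbm_kernel t a u - mbm_kernel s b u
      = cis (s * u) * (cis ((t - s) * u) - 1) * complex_of_real xa + (cis (s * u) - 1) * complex_of_real (xa - xb)"
    unfolding mbm_kernel_def xa_def xb_def by (simp add: algebra_simps cis_mult)
  then have "cmod (mbm_kernel t a u - mbm_kernel s b u)
      \<le> cmod (cis (s * u) * (cis ((t - s) * u) - 1) * complex_of_real xa) + cmod ((cis (s * u) - 1) * complex_of_real (xa - xb))"
    by (simp only: norm_triangle_ineq)
  also have "\<dots> = cmod (cis ((t - s) * u) - 1) * xa + cmod (cis (s * u) - 1) * \<bar>xa - xb\<bar>"
    using xa0 by (simp add: norm_mult del: of_real_diff)
  finally have "cmod (mbm_kernel t a u - mbm_kernel s b u)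
      \<le> cmod (cis ((t - s) * u) - 1) * xa + cmod (cis (s * u) - 1) * \<bar>xa - xb\<bar>" .
  then have "(cmod (mbm_kernel t a u - mbm_kernel s b u))\<^sup>2
      \<le> (cmod (cis ((t - s) * u) - 1) * xa + cmod (cis (s * u) - 1) * \<bar>xa - xb\<bar>)\<^sup>2"
    by (intro power_mono) auto
  also have "\<dots> \<le> 2 * (cmod (cis ((t - s) * u) - 1) * xa)\<^sup>2 + 2 * (cmod (cis (s * u) - 1) * \<bar>xa - xb\<bar>)\<^sup>2"
    by (rule square_add_le)
  also have "\<dots> = 2 * ((cmod (cis ((t - s) * u) - 1))\<^sup>2 * xa\<^sup>2) + 2 * ((cmod (cis (s * u) - 1))\<^sup>2 * (xa - xb)\<^sup>2)"
    by (simp add: power_mult_distrib)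
  also have "\<dots> \<le> 2 * (trunc_sq ((t - s) * u) * \<bar>u\<bar> powr (- (2*a + 1)))
      + 2 * (trunc_sq (s * u) * (4 / e\<^sup>2 * (a - b)\<^sup>2 * (\<bar>u\<bar> powr (- (2*a - 2*e + 1)) + \<bar>u\<bar> powr (- (2*a + 2*e + 1))
           + \<bar>u\<bar> powr (- (2*b - 2*e + 1)) + \<bar>u\<bar> powr (- (2*b + 2*e + 1)))))"
  proof (intro add_mono mult_left_mono mult_mono norm_cis_minus_one_sq_le)
    show "xa\<^sup>2 \<le> \<bar>u\<bar> powr (- (2*a + 1))" by (simp add: xa_def power2_eq_square powr_add[symmetric])
    show "(xa - xb)\<^sup>2 \<le> 4 / e\<^sup>2 * (a - b)\<^sup>2 * (\<bar>u\<bar> powr (- (2*a - 2*e + 1)) + \<bar>u\<bar> powr (- (2*a + 2*e + 1))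
           + \<bar>u\<bar> powr (- (2*b - 2*e + 1)) + \<bar>u\<bar> powr (- (2*b + 2*e + 1)))"
      unfolding xa_def xb_def using False e by (intro powr_diff_sq_le) auto
  qed (auto simp: trunc_sq_nonneg)
  finally show ?thesis by (simp add: algebra_simps)
qed simp

lemma integral_mbm_kernel_diff_sq_le:
  fixes a b e s t c1 c2 :: real
  assumes st: "0 \<le> s" "s \<le> t" and e: "0 < e" and c: "0 < c1" "c2 < 2"
    and a: "c1 \<le> 2*a - 2*e" "2*a + 2*e \<le> c2" and b: "c1 \<le> 2*b - 2*e" "2*b + 2*e \<le> c2"
  shows "(LINT u|lborel. (cmod (mbm_kernel t a u - mbm_kernel s b u))\<^sup>2)
    \<le> trunc_sq_powr_const c1 c2 * (2 * (t - s) powr (2*a)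
        + 8 / e\<^sup>2 * (a - b)\<^sup>2 * (s powr (2*a - 2*e) + s powr (2*a + 2*e) + s powr (2*b - 2*e) + s powr (2*b + 2*e)))"
proof -
  define F where "F c \<delta> u = trunc_sq (\<delta> * u) * \<bar>u\<bar> powr (- (c + 1))" for c \<delta> u
  define J where "J = trunc_sq_powr_const c1 c2"
  define k where "k = 8 / e\<^sup>2 * (a - b)\<^sup>2"
  have F: "integrable lborel (F c \<delta>)" "integral\<^sup>L lborel (F c \<delta>) \<le> J * \<delta> powr c"
    if "c1 \<le> c" "c \<le> c2" "0 \<le> \<delta>" for c \<delta>
    using trunc_sq_scaled_integral[OF c(1) that(1,2) c(2) that(3)] unfolding F_def[abs_def] J_def by simp_all
  have F_nonneg: "0 \<le> F c \<delta> u" for c \<delta> u by (simp add: F_def trunc_sq_nonneg)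
  define R where "R u = 2 * F (2*a) (t - s) u
    + k * (F (2*a - 2*e) s u + F (2*a + 2*e) s u + F (2*b - 2*e) s u + F (2*b + 2*e) s u)" for u
  have int: "integrable lborel (F (2*a) (t - s))" "integrable lborel (F (2*a - 2*e) s)"
    "integrable lborel (F (2*a + 2*e) s)" "integrable lborel (F (2*b - 2*e) s)" "integrable lborel (F (2*b + 2*e) s)"
    using a b e st by (auto intro!: F(1))
  have "(LINT u|lborel. (cmod (mbm_kernel t a u - mbm_kernel s b u))\<^sup>2) \<le> integral\<^sup>L lborel R"
  proof (rule integral_mono')
    show "integrable lborel R" unfolding R_def using int by simp
    show "(cmod (mbm_kernel t a u - mbm_kernel s b u))\<^sup>2 \<le> R u" for u
      using norm_mbm_kernel_diff_sq_le[OF st e, of a u b] unfolding R_def F_def k_def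
      by (simp add: algebra_simps)
    show "0 \<le> R u" for u unfolding R_def k_def using F_nonneg by simp
  qed
  also have "integral\<^sup>L lborel R = 2 * integral\<^sup>L lborel (F (2*a) (t - s))
      + k * (integral\<^sup>L lborel (F (2*a - 2*e) s) + integral\<^sup>L lborel (F (2*a + 2*e) s)
           + integral\<^sup>L lborel (F (2*b - 2*e) s) + integral\<^sup>L lborel (F (2*b + 2*e) s))"
    unfolding R_def using int by simp
  also have "\<dots> \<le> 2 * (J * (t - s) powr (2*a))
      + k * (J * s powr (2*a - 2*e) + J * s powr (2*a + 2*e) + J * s powr (2*b - 2*e) + J * s powr (2*b + 2*e))"
    using a b e st by (intro add_mono mult_left_mono F(2)) (auto simp: k_def)
  finally show ?thesis by (simp add: J_def k_def algebra_simps)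
qed

lemma powr_le_max_powr:
  fixes s t c C :: real
  assumes "0 \<le> s" "s \<le> t" "0 \<le> c" "c \<le> C"
  shows "s powr c \<le> max t 1 powr C"
proof -
  have "s powr c \<le> max t 1 powr c" using assms by (intro powr_mono2) auto
  also have "\<dots> \<le> max t 1 powr C" using assms by (intro powr_mono) auto
  finally show ?thesis .
qed

lemma mbm_increment_variance_le:
  fixes H :: "real \<Rightarrow> real" and h1 h2 D \<kappa> \<epsilon> :: real
  assumes H1: "\<forall>t\<ge>0. h1 \<le> H t \<and> H t \<le> h2" and h: "0 < h1" "h2 < 1"
    and Hoelder: "\<And>t s. 0 \<le> s \<Longrightarrow> s \<le> t \<Longrightarrow> \<bar>H t - H s\<bar> \<le> D * (t - s) powr \<kappa>"
    and \<epsilon>: "0 < \<epsilon>"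
  obtains K where "0 < K"
    "\<And>t s. 0 \<le> s \<Longrightarrow> s < t \<Longrightarrow> t \<le> s + 1 \<Longrightarrow>
       mbm_cov H t t - 2 * mbm_cov H t s + mbm_cov H s s
         \<le> K * max t 1 powr (2 * h2 + \<epsilon>) * (t - s) powr (2 * min h1 \<kappa>)"
proof
  txt \<open>The shifted exponents \<open>2 * H \<plusminus> 2 * e\<close> stay in \<open>[c1, c2] \<subseteq> (0, 2)\<close>.\<close>
  define e where "e = min (min h1 (1 - h2)) \<epsilon> / 2"
  have e: "0 < e" "e \<le> h1 / 2" "e \<le> (1 - h2) / 2" "2 * e \<le> \<epsilon>" using h \<epsilon> by (auto simp: e_def)
  define c1 c2 where "c1 = 2 * h1 - 2 * e" and "c2 = 2 * h2 + 2 * e"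
  define J where "J = trunc_sq_powr_const c1 c2"
  have c: "0 < c1" "c2 < 2" using e by (auto simp: c1_def c2_def)
  then have "0 < J" unfolding J_def by (rule trunc_sq_powr_const_pos)
  show "0 < J * (2 + 32 * D\<^sup>2 / e\<^sup>2) / (2 * pi)"
    using \<open>0 < J\<close> by (intro divide_pos_pos mult_pos_pos add_pos_nonneg) auto
  fix t s :: real assume st: "0 \<le> s" "s < t" "t \<le> s + 1"
  define a b where "a = H t" and "b = H s"
  have ab: "h1 \<le> a" "a \<le> h2" "h1 \<le> b" "b \<le> h2" using H1 st by (auto simp: a_def b_def)
  define M Q where "M = max t 1 powr (2 * h2 + \<epsilon>)" and "Q = (t - s) powr (2 * min h1 \<kappa>)"
  have "h1 \<le> H 0 \<and> H 0 \<le> h2" using H1 by simp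
  then have "0 \<le> 2 * h2 + \<epsilon>" using h \<epsilon> by linarith
  then have M: "1 \<le> M" unfolding M_def by (simp add: ge_one_powr_ge_zero)
  have Q: "0 \<le> Q" by (simp add: Q_def)
  have "(t - s) powr (2 * a) \<le> Q" unfolding Q_def using st ab by (intro powr_mono') auto
  then have increment: "(t - s) powr (2 * a) \<le> Q * M" using M Q mult_left_mono[of 1 M Q] by simp
  have "\<bar>a - b\<bar> \<le> \<bar>D * (t - s) powr \<kappa>\<bar>"
    using Hoelder[of s t] st abs_ge_self[of "D * (t - s) powr \<kappa>"] unfolding a_def b_def by linarith
  then have "(a - b)\<^sup>2 \<le> (D * (t - s) powr \<kappa>)\<^sup>2" by (simp only: abs_le_square_iff)
  also have "\<dots> = D\<^sup>2 * (t - s) powr (2 * \<kappa>)"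
    using st by (simp add: power_mult_distrib power2_eq_square powr_add[symmetric])
  also have "\<dots> \<le> D\<^sup>2 * Q" unfolding Q_def using st by (intro mult_left_mono powr_mono') auto
  finally have hurst: "(a - b)\<^sup>2 \<le> D\<^sup>2 * Q" .
  have level: "s powr r \<le> M" if "c1 \<le> r" "r \<le> c2" for r
    unfolding M_def using st that c e by (intro powr_le_max_powr) (auto simp: c2_def)
  have "mbm_cov H t t - 2 * mbm_cov H t s + mbm_cov H s s
      = 1 / (2 * pi) * (LINT u|lborel. (cmod (mbm_kernel t a u - mbm_kernel s b u))\<^sup>2)"
    using st ab h unfolding a_def b_def by (intro mbm_increment_variance_eq) auto
  also have "\<dots> \<le> 1 / (2 * pi) * (J * (2 * (t - s) powr (2*a)
        + 8 / e\<^sup>2 * (a - b)\<^sup>2 * (s powr (2*a - 2*e) + s powr (2*a + 2*e) + s powr (2*b - 2*e) + s powr (2*b + 2*e))))"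
    unfolding J_def using st ab e c
    by (intro mult_left_mono integral_mbm_kernel_diff_sq_le) (auto simp: c1_def c2_def)
  also have "\<dots> \<le> 1 / (2 * pi) * (J * (2 * (Q * M) + 8 / e\<^sup>2 * (D\<^sup>2 * Q) * (M + M + M + M)))"
    using increment hurst level ab e \<open>0 < J\<close> Q
    by (intro mult_left_mono add_mono mult_mono) (auto simp: c1_def c2_def)
  also have "\<dots> = J * (2 + 32 * D\<^sup>2 / e\<^sup>2) / (2 * pi) * max t 1 powr (2 * h2 + \<epsilon>) * (t - s) powr (2 * min h1 \<kappa>)"
    unfolding M_def Q_def using e by (simp add: field_simps)
  finally show "mbm_cov H t t - 2 * mbm_cov H t s + mbm_cov H s s
      \<le> J * (2 + 32 * D\<^sup>2 / e\<^sup>2) / (2 * pi) * max t 1 powr (2 * h2 + \<epsilon>) * (t - s) powr (2 * min h1 \<kappa>)" .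
qed

lemma Hoelder_bound_at_zero:
  fixes H :: "real \<Rightarrow> real"
  assumes H_cont: "continuous_on {0..} H"
    and Hoelder: "\<forall>t s. 0 < s \<and> s \<le> t \<longrightarrow> \<bar>H t - H s\<bar> \<le> D * (t - s) powr \<kappa>"
    and \<kappa>: "0 < \<kappa>" and st: "0 \<le> s" "s \<le> t"
  shows "\<bar>H t - H s\<bar> \<le> D * (t - s) powr \<kappa>"
proof (cases "0 < s \<or> t = 0")
  case True
  then show ?thesis using Hoelder st by auto
next
  case False
  then have "s = 0" "0 < t" using st by auto
  define f where "f x = \<bar>H t - H x\<bar> - D * (t - x) powr \<kappa>" for x
  have "continuous_on {0..t} H" using H_cont by (rule continuous_on_subset) auto
  moreover have "continuous_on {0..t} (\<lambda>x. (t - x) powr \<kappa>)"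
    using \<kappa> by (intro continuous_on_powr' continuous_intros) auto
  ultimately have "continuous_on (closure {0<..t}) f"
    unfolding f_def using \<open>0 < t\<close> by (simp add: continuous_on_diff continuous_on_rabs continuous_on_mult_left)
  then have "f 0 \<le> 0"
  proof (rule continuous_le_on_closure)
    show "0 \<in> closure {0<..t}" using \<open>0 < t\<close> by simp
    show "f x \<le> 0" if "x \<in> {0<..t}" for x using Hoelder that unfolding f_def by auto
  qed
  then show ?thesis using \<open>s = 0\<close> by (simp add: f_def)
qed

lemma mbm_increment_char:
  assumes Y: "harmonizable_mbm M H Y" and ts: "0 \<le> t" "0 \<le> s"
  shows "(\<integral>\<omega>. cis (\<theta> * (Y t \<omega> - Y s \<omega>)) \<partial>M) =
    complex_of_real (exp (- (\<theta>\<^sup>2 * (mbm_cov H t t - 2 * mbm_cov H t s + mbm_cov H s s)) / 2))"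
proof -
  define tt where "tt k = (if k = (0::nat) then t else s)" for k
  define a where "a k = (if k = (0::nat) then \<theta> else - \<theta>)" for k
  have "\<forall>k<2. tt k \<ge> 0" using ts by (simp add: tt_def)
  then have "(\<integral>\<omega>. cis (\<Sum>k<2. a k * Y (tt k) \<omega>) \<partial>M) =
        complex_of_real (exp (- (\<Sum>j<2. \<Sum>k<2. a j * a k * mbm_cov H (tt j) (tt k)) / 2))"
    using Y unfolding harmonizable_mbm_def by blast
  moreover have "(\<Sum>k<2. a k * Y (tt k) \<omega>) = \<theta> * (Y t \<omega> - Y s \<omega>)" for \<omega>
    by (simp add: numeral_2_eq_2 a_def tt_def algebra_simps)
  moreover have "(\<Sum>j<2. \<Sum>k<2. a j * a k * mbm_cov H (tt j) (tt k))
      = \<theta>\<^sup>2 * (mbm_cov H t t - 2 * mbm_cov H t s + mbm_cov H s s)"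
    by (simp add: numeral_2_eq_2 a_def tt_def mbm_cov_sym[of H s t] algebra_simps power2_eq_square)
  ultimately show ?thesis by simp
qed

lemma (in prob_space) mbm_increment_tail_le:
  assumes Y: "harmonizable_mbm M H Y" and st: "0 \<le> s" "0 \<le> t"
    and V: "mbm_cov H t t - 2 * mbm_cov H t s + mbm_cov H s s \<le> V" "0 < V" and x: "0 < x"
  shows "prob {\<omega>\<in>space M. x < \<bar>Y t \<omega> - Y s \<omega>\<bar>} \<le> 2 * exp (- x\<^sup>2 / (4 * V))"
proof (rule gaussian_tail_le[OF _ _ x V])
  show "(\<lambda>\<omega>. Y t \<omega> - Y s \<omega>) \<in> borel_measurable M"
    using Y st unfolding harmonizable_mbm_def by (intro borel_measurable_diff) auto
  show "(\<integral>\<omega>. cis (\<theta> * (Y t \<omega> - Y s \<omega>)) \<partial>M)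
      = complex_of_real (exp (- (\<theta>\<^sup>2 * (mbm_cov H t t - 2 * mbm_cov H t s + mbm_cov H s s)) / 2))" for \<theta>
    using Y st(2,1) by (rule mbm_increment_char)
qed

section \<open>Dyadic chaining\<close>

definition dyadic_index :: "nat \<Rightarrow> real \<Rightarrow> nat" where
  "dyadic_index n t = nat \<lfloor>t * 2 ^ n\<rfloor>"

definition dyadic_approx :: "nat \<Rightarrow> real \<Rightarrow> real" where
  "dyadic_approx n t = real (dyadic_index n t) / 2 ^ n"

lemma dyadic_index_Suc:
  assumes "0 \<le> t"
  shows "dyadic_index (Suc n) t = 2 * dyadic_index n t \<or> dyadic_index (Suc n) t = Suc (2 * dyadic_index n t)"
proof -
  define x where "x = t * 2 ^ n"
  have "2 * \<lfloor>x\<rfloor> \<le> \<lfloor>2 * x\<rfloor>" "\<lfloor>2 * x\<rfloor> < 2 * \<lfloor>x\<rfloor> + 2"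
    by (simp_all add: le_floor_iff floor_less_iff) linarith+
  then have "\<lfloor>2 * x\<rfloor> = 2 * \<lfloor>x\<rfloor> \<or> \<lfloor>2 * x\<rfloor> = 2 * \<lfloor>x\<rfloor> + 1" by linarith
  moreover have "0 \<le> \<lfloor>x\<rfloor>" using assms by (simp add: x_def)
  moreover have "dyadic_index (Suc n) t = nat \<lfloor>2 * x\<rfloor>" "dyadic_index n t = nat \<lfloor>x\<rfloor>"
    by (simp_all add: dyadic_index_def x_def ac_simps)
  ultimately show ?thesis by (auto simp: nat_mult_distrib nat_add_distrib)
qed

lemma dyadic_index_le_Suc:
  assumes "0 \<le> s" "s \<le> t" "t \<le> s + 1 / 2 ^ n"
  shows "dyadic_index n t = dyadic_index n s \<or> dyadic_index n t = Suc (dyadic_index n s)"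
proof -
  have "t * 2 ^ n \<le> s * 2 ^ n + 1" using assms(3) by (simp add: field_simps)
  then have "\<lfloor>t * 2 ^ n\<rfloor> \<le> \<lfloor>s * 2 ^ n\<rfloor> + 1" using floor_mono by fastforce
  moreover have "\<lfloor>s * 2 ^ n\<rfloor> \<le> \<lfloor>t * 2 ^ n\<rfloor>" using assms(2) by (intro floor_mono) simp
  moreover have "0 \<le> \<lfloor>s * 2 ^ n\<rfloor>" using assms(1) by simp
  ultimately show ?thesis unfolding dyadic_index_def by linarith
qed

lemma dyadic_approx_bounds:
  assumes "0 \<le> t"
  shows "0 \<le> dyadic_approx n t" "dyadic_approx n t \<le> t" "t - dyadic_approx n t < 1 / 2 ^ n"
proof -
  define x where "x = t * 2 ^ n"
  have index: "real (dyadic_index n t) = of_int \<lfloor>x\<rfloor>" using assms by (simp add: dyadic_index_def x_def)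
  show "0 \<le> dyadic_approx n t" by (simp add: dyadic_approx_def)
  show "dyadic_approx n t \<le> t"
    unfolding dyadic_approx_def index x_def by (simp add: pos_divide_le_eq)
  have "t < (of_int \<lfloor>x\<rfloor> + 1) / 2 ^ n"
    using real_of_int_floor_add_one_gt[of x] unfolding x_def by (simp add: pos_less_divide_eq)
  then show "t - dyadic_approx n t < 1 / 2 ^ n"
    unfolding dyadic_approx_def index by (simp add: add_divide_distrib)
qed

lemma dyadic_approx_tendsto:
  assumes "0 \<le> t"
  shows "(\<lambda>n. dyadic_approx n t) \<longlonglongrightarrow> t"
proof -
  have "(\<lambda>n. t - dyadic_approx n t) \<longlonglongrightarrow> 0"
  proof (rule tendsto_sandwich[of "\<lambda>_. 0" _ _ "\<lambda>n. (1/2) ^ n"])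
    show "\<forall>\<^sub>F n in sequentially. t - dyadic_approx n t \<le> (1/2) ^ n"
      using dyadic_approx_bounds(3)[OF assms] by (simp add: power_one_over less_imp_le)
  qed (use dyadic_approx_bounds[OF assms] LIMSEQ_power_zero[of "1/2::real"] in auto)
  then have "(\<lambda>n. t - (t - dyadic_approx n t)) \<longlonglongrightarrow> t - 0" by (intro tendsto_intros)
  then show ?thesis by simp
qed

lemma dyadic_level_exists:
  fixes \<delta> :: real
  assumes "0 < \<delta>" "\<delta> \<le> 1"
  obtains m where "1 / 2 ^ Suc m < \<delta>" "\<delta> \<le> 1 / 2 ^ m"
proof
  define L where "L = log 2 (1 / \<delta>)"
  define m where "m = nat \<lfloor>L\<rfloor>"
  have "0 \<le> L" using assms by (simp add: L_def)
  then have mL: "real m \<le> L" "L < real m + 1" by (simp_all add: m_def)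
  have pL: "2 powr L = 1 / \<delta>" using assms by (simp add: L_def)
  have "(2::real) ^ m \<le> 2 powr L" using mL by (simp add: powr_realpow[symmetric])
  then show "\<delta> \<le> 1 / 2 ^ m" using pL assms by (simp add: field_simps)
  have "2 powr L < 2 powr (real m + 1)" using mL by simp
  then have "2 powr L < (2::real) ^ Suc m" by (simp add: powr_add powr_realpow)
  then show "1 / 2 ^ Suc m < \<delta>" using pL assms by (simp add: field_simps)
qed

lemma le_max_powr_one:
  fixes y p :: real
  assumes "0 \<le> y" "1 \<le> p"
  shows "y \<le> max (y powr p) 1"
proof (cases "y \<le> 1")
  case False
  then have "y powr 1 \<le> y powr p" using assms by (intro powr_mono) auto
  then show ?thesis using False by simp
qed simp

lemma dyadic_level_weight_le:
  fixes \<delta> h p :: real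
  assumes m: "1 / 2 ^ Suc m < \<delta>" "\<delta> \<le> 1 / 2 ^ m" and h: "0 < h" "h \<le> 1" and p: "1 \<le> p"
  shows "(1 / 2 ^ m) powr h * real (Suc m) \<le> 2 * (1 / ln 2 + 1) * (\<delta> powr h * max (\<bar>ln \<delta>\<bar> powr p) 1)"
proof -
  have \<delta>: "0 < \<delta>" "\<delta> \<le> 1" using m by (auto intro: less_trans[of 0] order_trans)
  have "(1 / 2 ^ m) powr h \<le> (2 * \<delta>) powr h"
    using m(1) h by (intro powr_mono2) (auto simp: field_simps)
  also have "\<dots> = 2 powr h * \<delta> powr h" using \<delta> by (simp add: powr_mult)
  also have "\<dots> \<le> 2 * \<delta> powr h" using h powr_mono[of h 1 "2::real"] by (intro mult_right_mono) auto
  finally have weight: "(1 / 2 ^ m) powr h \<le> 2 * \<delta> powr h" .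
  have "real m * ln 2 = ln (2 ^ m)" by (simp add: ln_realpow)
  also have "\<dots> \<le> ln (1 / \<delta>)" using m(2) \<delta> by (simp add: field_simps)
  also have "\<dots> = \<bar>ln \<delta>\<bar>" using \<delta> by (simp add: ln_div)
  finally have "real m \<le> \<bar>ln \<delta>\<bar> / ln 2" by (simp add: field_simps)
  define y where "y = max (\<bar>ln \<delta>\<bar> powr p) 1"
  have "\<bar>ln \<delta>\<bar> \<le> y" unfolding y_def using p by (intro le_max_powr_one) auto
  then have "\<bar>ln \<delta>\<bar> / ln 2 \<le> y / ln 2" by (intro divide_right_mono) auto
  moreover have "1 \<le> y" by (simp add: y_def)
  ultimately have "real (Suc m) \<le> y / ln 2 + y"
    using \<open>real m \<le> \<bar>ln \<delta>\<bar> / ln 2\<close> by simp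
  then have count: "real (Suc m) \<le> (1 / ln 2 + 1) * max (\<bar>ln \<delta>\<bar> powr p) 1"
    by (simp add: y_def algebra_simps)
  have "(1 / 2 ^ m) powr h * real (Suc m) \<le> (2 * \<delta> powr h) * ((1 / ln 2 + 1) * max (\<bar>ln \<delta>\<bar> powr p) 1)"
    using weight count by (intro mult_mono) auto
  then show ?thesis by (simp only: ac_simps)
qed

text \<open>\<open>geom_tail q n\<close> majorizes \<open>\<Sum>k>n. q ^ k * (k + 1)\<close>.\<close>

definition geom_tail :: "real \<Rightarrow> nat \<Rightarrow> real" where
  "geom_tail q n = 2 * q / (1 - q) * q ^ n * (real n + 1 / (1 - q))"

lemma geom_tail_step:
  assumes q: "0 < q" "q < 1"
  shows "q ^ Suc n * real (Suc (Suc n)) + geom_tail q (Suc n) \<le> geom_tail q n"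
proof -
  define c where "c = 2 * q / (1 - q)"
  define A where "A = 1 / (1 - q)"
  have c: "c * (1 - q) = 2 * q" and A: "A * (1 - q) = 1" using q by (simp_all add: c_def A_def)
  have "c * (real n + A) - c * q * (real n + 1 + A) = c * (1 - q) * real n + c * (A * (1 - q)) - c * q"
    by (simp add: algebra_simps)
  also have "\<dots> = 2 * q * real n + c - c * q" unfolding c A by simp
  also have "\<dots> = 2 * q * real n + c * (1 - q)" by (simp add: algebra_simps)
  also have "\<dots> = 2 * q * real n + 2 * q" unfolding c ..
  moreover have "0 \<le> q * real n" using q by simp
  moreover have "q * real (Suc (Suc n)) = 2 * q + q * real n" by (simp add: algebra_simps)
  ultimately have "q * real (Suc (Suc n)) + c * q * (real (Suc n) + A) \<le> c * (real n + A)"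
    by (simp add: algebra_simps)
  then have "q ^ n * (q * real (Suc (Suc n)) + c * q * (real (Suc n) + A)) \<le> q ^ n * (c * (real n + A))"
    using q by (intro mult_left_mono) auto
  then show ?thesis unfolding geom_tail_def c_def[symmetric] A_def[symmetric] by (simp add: algebra_simps)
qed

lemma geom_tail_nonneg: "0 \<le> q \<Longrightarrow> q < 1 \<Longrightarrow> 0 \<le> geom_tail q n"
  by (simp add: geom_tail_def)

lemma geom_tail_le:
  assumes "0 \<le> q" "q < 1"
  shows "geom_tail q n \<le> 2 * q / (1 - q)\<^sup>2 * (q ^ n * real (Suc n))"
proof -
  have "real n + 1 / (1 - q) = (real n * (1 - q) + 1) / (1 - q)" using assms by (simp add: field_simps)
  also have "\<dots> \<le> real (Suc n) / (1 - q)"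
    using assms mult_nonneg_nonneg[of q "real n"] by (intro divide_right_mono) (auto simp: algebra_simps)
  finally have "real n + 1 / (1 - q) \<le> real (Suc n) / (1 - q)" .
  then have "2 * q / (1 - q) * q ^ n * (real n + 1 / (1 - q)) \<le> 2 * q / (1 - q) * q ^ n * (real (Suc n) / (1 - q))"
    using assms by (intro mult_left_mono) auto
  then show ?thesis unfolding geom_tail_def by (simp add: power2_eq_square)
qed

lemma telescoping_limit_le_geom_tail:
  fixes g :: "nat \<Rightarrow> real"
  assumes lim: "g \<longlonglongrightarrow> L" and q: "0 < q" "q < 1" and C: "0 \<le> C"
    and step: "\<And>n. \<bar>g (Suc n) - g n\<bar> \<le> C * (q ^ Suc n * real (Suc (Suc n)))"
  shows "\<bar>L - g m\<bar> \<le> C * geom_tail q m"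
proof -
  have partial: "\<bar>g N - g m\<bar> \<le> C * (geom_tail q m - geom_tail q N)" if "m \<le> N" for N
    using that
  proof (induction N rule: dec_induct)
    case (step N)
    have "\<bar>g (Suc N) - g m\<bar> \<le> C * (q ^ Suc N * real (Suc (Suc N))) + C * (geom_tail q m - geom_tail q N)"
      using step.IH assms(5)[of N] by linarith
    also have "\<dots> \<le> C * (geom_tail q m - geom_tail q (Suc N))"
      using mult_left_mono[OF geom_tail_step[OF q, of N] C] by (simp add: algebra_simps)
    finally show ?case .
  qed simp
  have "\<bar>g N - g m\<bar> \<le> C * geom_tail q m" if "m \<le> N" for N
    using partial[OF that] mult_nonneg_nonneg[OF C geom_tail_nonneg[of q N]] q
    by (simp add: right_diff_distrib)
  moreover have "(\<lambda>N. \<bar>g N - g m\<bar>) \<longlonglongrightarrow> \<bar>L - g m\<bar>" using lim by (intro tendsto_intros)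
  ultimately show ?thesis by (intro LIMSEQ_le_const2) blast+
qed

lemma dyadic_approx_dist_le:
  fixes f :: "real \<Rightarrow> real"
  assumes f: "continuous_on {0..} f" and t: "0 \<le> t" and q: "0 < q" "q < 1" and C: "0 \<le> C"
    and neighbour: "\<And>n j. real (Suc j) / 2 ^ n \<le> t \<Longrightarrow>
      \<bar>f (real (Suc j) / 2 ^ n) - f (real j / 2 ^ n)\<bar> \<le> C * (q ^ n * real (Suc n))"
  shows "\<bar>f t - f (dyadic_approx m t)\<bar> \<le> C * geom_tail q m"
proof (rule telescoping_limit_le_geom_tail[OF _ q C])
  show "(\<lambda>n. f (dyadic_approx n t)) \<longlonglongrightarrow> f t"
  proof (rule continuous_on_tendsto_compose[OF f dyadic_approx_tendsto[OF t]])
    show "\<forall>\<^sub>F n in sequentially. dyadic_approx n t \<in> {0..}"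
      using dyadic_approx_bounds(1)[OF t] by (simp add: always_eventually)
  qed (use t in simp)
  fix n
  define j where "j = dyadic_index n t"
  have approx_n: "dyadic_approx n t = real (2 * j) / 2 ^ Suc n"
    by (simp add: dyadic_approx_def j_def)
  consider "dyadic_index (Suc n) t = 2 * j" | "dyadic_index (Suc n) t = Suc (2 * j)"
    using dyadic_index_Suc[OF t] j_def by blast
  then show "\<bar>f (dyadic_approx (Suc n) t) - f (dyadic_approx n t)\<bar> \<le> C * (q ^ Suc n * real (Suc (Suc n)))"
  proof cases
    case 1
    then show ?thesis using C q by (simp add: dyadic_approx_def j_def)
  next
    case 2
    then have "dyadic_approx (Suc n) t = real (Suc (2 * j)) / 2 ^ Suc n"
      by (simp add: dyadic_approx_def)
    then show ?thesis
      using neighbour[of "2 * j" "Suc n"] dyadic_approx_bounds(2)[OF t, of "Suc n"] by (simp add: approx_n)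
  qed
qed

lemma dyadic_approx_bridge_le:
  fixes f :: "real \<Rightarrow> real"
  assumes st: "0 \<le> s" "s \<le> t" "t \<le> s + 1 / 2 ^ m" and w: "0 \<le> w"
    and neighbour: "\<And>j. real (Suc j) / 2 ^ m \<le> t \<Longrightarrow> \<bar>f (real (Suc j) / 2 ^ m) - f (real j / 2 ^ m)\<bar> \<le> w"
  shows "\<bar>f (dyadic_approx m t) - f (dyadic_approx m s)\<bar> \<le> w"
proof -
  define j where "j = dyadic_index m s"
  have "dyadic_index m t = j \<or> dyadic_index m t = Suc j"
    using dyadic_index_le_Suc[OF st] unfolding j_def .
  then show ?thesis
  proof
    assume "dyadic_index m t = j"
    then show ?thesis using w by (simp add: dyadic_approx_def j_def)
  next
    assume idx: "dyadic_index m t = Suc j"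
    have "real (Suc j) / 2 ^ m \<le> t"
      using dyadic_approx_bounds(2)[of t m] st idx by (simp add: dyadic_approx_def)
    then show ?thesis using neighbour[of j] idx by (simp add: dyadic_approx_def j_def)
  qed
qed

definition chaining_const :: "real \<Rightarrow> real" where
  "chaining_const h = 2 * (1 + 4 * (1/2) powr h / (1 - (1/2) powr h)\<^sup>2) * (1 / ln 2 + 1)"

lemma chaining_const_pos: "0 < chaining_const h"
proof -
  have "0 < 1 + 4 * (1/2::real) powr h / (1 - (1/2) powr h)\<^sup>2" by (intro add_pos_nonneg) auto
  moreover have "0 < 1 / ln 2 + (1::real)" by (simp add: add_pos_pos)
  ultimately show ?thesis unfolding chaining_const_def by simp
qed

text \<open>\<open>dyadic_weight \<alpha> h n j\<close> is the admissible size of an increment over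
  \<open>[j / 2 ^ n, (j + 1) / 2 ^ n]\<close>.\<close>

definition dyadic_weight :: "real \<Rightarrow> real \<Rightarrow> nat \<Rightarrow> nat \<Rightarrow> real" where
  "dyadic_weight \<alpha> h n j = max (real (Suc j) / 2 ^ n) 1 powr \<alpha> * ((1 / 2 ^ n) powr h * real (Suc n))"

lemma dyadic_weight_pos: "0 < dyadic_weight \<alpha> h n j"
  by (simp add: dyadic_weight_def)

lemma dyadic_chaining:
  fixes f :: "real \<Rightarrow> real" and B \<alpha> h p t1 t2 :: real
  assumes f: "continuous_on {0..} f" and B: "0 \<le> B" and \<alpha>: "0 \<le> \<alpha>"
    and h: "0 < h" "h \<le> 1" and p: "1 \<le> p"
    and inc: "\<And>n j. \<bar>f (real (Suc j) / 2 ^ n) - f (real j / 2 ^ n)\<bar> \<le> B * dyadic_weight \<alpha> h n j"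
    and t: "0 \<le> t2" "t2 < t1" "t1 \<le> t2 + 1"
  shows "\<bar>f t1 - f t2\<bar>
    \<le> chaining_const h * B * max t1 1 powr \<alpha> * (t1 - t2) powr h * max (\<bar>ln (t1 - t2)\<bar> powr p) 1"
proof -
  define q :: real where "q = (1/2) powr h"
  have q: "0 < q" "q < 1" using h powr_less_mono2[of h "1/2" 1] by (auto simp: q_def)
  have q_pow: "(1 / 2 ^ n) powr h = q ^ n" for n
  proof -
    have "(1 / 2 ^ n) powr h = ((1/2) powr real n) powr h" by (simp add: powr_realpow power_one_over)
    also have "\<dots> = q ^ n" by (simp add: q_def powr_powr powr_power mult.commute)
    finally show ?thesis .
  qed
  define BW where "BW = B * max t1 1 powr \<alpha>"
  have BW: "0 \<le> BW" using B by (simp add: BW_def)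
  have neighbour: "\<bar>f (real (Suc j) / 2 ^ n) - f (real j / 2 ^ n)\<bar> \<le> BW * (q ^ n * real (Suc n))"
    if "real (Suc j) / 2 ^ n \<le> t1" for n j
  proof -
    have "max (real (Suc j) / 2 ^ n) 1 powr \<alpha> \<le> max t1 1 powr \<alpha>"
      using that \<alpha> by (intro powr_mono2) auto
    then have "B * dyadic_weight \<alpha> h n j \<le> BW * (q ^ n * real (Suc n))"
      unfolding BW_def dyadic_weight_def q_pow mult.assoc[symmetric] using B q
      by (intro mult_right_mono mult_left_mono) auto
    then show ?thesis using inc[of j n] by linarith
  qed
  have approx: "\<bar>f t - f (dyadic_approx m t)\<bar> \<le> BW * geom_tail q m" if "0 \<le> t" "t \<le> t1" for t m
    using that by (intro dyadic_approx_dist_le[OF f _ q BW] neighbour) auto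
  define \<delta> where "\<delta> = t1 - t2"
  have \<delta>: "0 < \<delta>" "\<delta> \<le> 1" using t by (auto simp: \<delta>_def)
  obtain m where m: "1 / 2 ^ Suc m < \<delta>" "\<delta> \<le> 1 / 2 ^ m"
    using dyadic_level_exists[OF \<delta>] .
  have bridge: "\<bar>f (dyadic_approx m t1) - f (dyadic_approx m t2)\<bar> \<le> BW * (q ^ m * real (Suc m))"
    using t m(2) BW q by (intro dyadic_approx_bridge_le neighbour) (auto simp: \<delta>_def)
  have "\<bar>f t1 - f t2\<bar> \<le> BW * (2 * geom_tail q m + q ^ m * real (Suc m))"
    using approx[of t1 m] approx[of t2 m] bridge t by (simp add: algebra_simps)
  also have "\<dots> \<le> BW * ((1 + 4 * q / (1 - q)\<^sup>2) * (q ^ m * real (Suc m)))"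
  proof -
    have "2 * geom_tail q m \<le> 2 * (2 * q / (1 - q)\<^sup>2 * (q ^ m * real (Suc m)))"
      using geom_tail_le[of q m] q by simp
    then show ?thesis using BW by (intro mult_left_mono) (simp_all add: algebra_simps)
  qed
  also have "\<dots> \<le> BW * ((1 + 4 * q / (1 - q)\<^sup>2) * (2 * (1 / ln 2 + 1) * (\<delta> powr h * max (\<bar>ln \<delta>\<bar> powr p) 1)))"
    using dyadic_level_weight_le[OF m h p] q BW unfolding q_pow by (intro mult_left_mono) auto
  finally show ?thesis unfolding chaining_const_def BW_def \<delta>_def q_def by (simp only: ac_simps)
qed

section \<open>The supremum of the normalized dyadic increments\<close>

lemma exp_neg_mult_le:
  fixes a x :: real
  assumes "1 \<le> a" "1 \<le> x"
  shows "exp (- (a * x)) \<le> exp (1 - a) * exp (- x)"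
proof -
  have "0 \<le> (a - 1) * (x - 1)" using assms by simp
  then have "- (a * x) \<le> (1 - a) + - x" by (simp add: algebra_simps)
  then show ?thesis by (simp add: exp_add[symmetric])
qed

lemma exp_neg_powr_le:
  fixes T \<epsilon> :: real and N :: nat
  assumes T: "1 \<le> T" and N: "0 < N" "2 \<le> \<epsilon> * real N"
  shows "exp (- (T powr \<epsilon>)) \<le> real N ^ N / T\<^sup>2"
proof -
  have "(T powr \<epsilon> / real N) ^ N \<le> (1 + T powr \<epsilon> / real N) ^ N" by (intro power_mono) auto
  also have "\<dots> \<le> exp (T powr \<epsilon>)"
    by (rule exp_ge_one_plus_x_over_n_power_n) (use N powr_ge_zero[of T \<epsilon>] in linarith)+
  finally have "real N ^ N * (T powr \<epsilon> / real N) ^ N \<le> real N ^ N * exp (T powr \<epsilon>)"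
    by (intro mult_left_mono) auto
  moreover have "T powr 2 \<le> T powr (\<epsilon> * real N)" using T N by (intro powr_mono) auto
  then have "T\<^sup>2 \<le> (T powr \<epsilon>) ^ N" using T by (simp add: powr_numeral powr_power mult.commute)
  moreover have "(T powr \<epsilon>) ^ N = real N ^ N * (T powr \<epsilon> / real N) ^ N" using N by (simp add: power_divide)
  ultimately have "T\<^sup>2 \<le> real N ^ N * exp (T powr \<epsilon>)" by linarith
  then show ?thesis using T by (simp add: exp_minus field_simps)
qed

lemma exp_neg_dyadic_le:
  fixes \<epsilon> :: real and N n j :: nat
  assumes N: "0 < N" "2 \<le> \<epsilon> * real N"
  shows "exp (- (max (real (Suc j) / 2 ^ n) 1 powr \<epsilon> * (real (Suc n))\<^sup>2))
    \<le> exp 1 * real N ^ N * (4 * exp (-3)) ^ n * inverse ((real (Suc j))\<^sup>2)"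
proof -
  define T where "T = max (real (Suc j) / 2 ^ n) 1"
  have T: "1 \<le> T" by (simp add: T_def)
  have "0 < \<epsilon> * real N" using N by linarith
  then have \<epsilon>: "0 \<le> \<epsilon>" using N(1) by (simp add: zero_less_mult_iff)
  have "exp (- (T powr \<epsilon> * (real (Suc n))\<^sup>2)) \<le> exp (1 - T powr \<epsilon>) * exp (- (real (Suc n))\<^sup>2)"
    using T \<epsilon> by (intro exp_neg_mult_le ge_one_powr_ge_zero) auto
  also have "\<dots> = exp 1 * exp (- (T powr \<epsilon>)) * exp (- (real (Suc n))\<^sup>2)" by (simp add: mult_exp_exp)
  finally have split: "exp (- (T powr \<epsilon> * (real (Suc n))\<^sup>2)) \<le> exp 1 * exp (- (T powr \<epsilon>)) * exp (- (real (Suc n))\<^sup>2)" .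
  have "3 * real n \<le> (real (Suc n))\<^sup>2"
    using zero_le_power2[of "real n - 1/2"] by (simp add: power2_eq_square algebra_simps)
  then have level: "exp (- (real (Suc n))\<^sup>2) \<le> exp (-3) ^ n" by (simp add: exp_of_nat_mult[symmetric])
  have "(real (Suc j) / 2 ^ n)\<^sup>2 \<le> T\<^sup>2" by (intro power_mono) (auto simp: T_def)
  moreover have "((2::real) ^ n)\<^sup>2 = 4 ^ n" by (simp add: power2_eq_square power_mult_distrib[symmetric])
  ultimately have "(real (Suc j))\<^sup>2 \<le> 4 ^ n * T\<^sup>2" by (simp add: power_divide field_simps)
  then have "real N ^ N / T\<^sup>2 \<le> real N ^ N * (4 ^ n * inverse ((real (Suc j))\<^sup>2))"
    using T by (simp add: field_simps mult_left_mono)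
  then have position: "exp (- (T powr \<epsilon>)) \<le> real N ^ N * (4 ^ n * inverse ((real (Suc j))\<^sup>2))"
    using exp_neg_powr_le[OF T N] by linarith
  have "exp 1 * exp (- (T powr \<epsilon>)) * exp (- (real (Suc n))\<^sup>2)
      \<le> exp 1 * (real N ^ N * (4 ^ n * inverse ((real (Suc j))\<^sup>2))) * exp (-3) ^ n"
    using position level by (intro mult_mono mult_left_mono) auto
  also have "\<dots> = exp 1 * real N ^ N * (4 * exp (-3)) ^ n * inverse ((real (Suc j))\<^sup>2)"
    by (simp add: power_mult_distrib ac_simps)
  finally show ?thesis using order_trans[OF split] unfolding T_def by blast
qed

lemma summable_exp_neg_dyadic:
  fixes \<epsilon> :: real
  assumes "0 < \<epsilon>"
  shows "(\<Sum>n. \<Sum>j. ennreal (exp (- (max (real (Suc j) / 2 ^ n) 1 powr \<epsilon> * (real (Suc n))\<^sup>2)))) < \<infinity>"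
proof -
  define N where "N = nat \<lceil>2 / \<epsilon>\<rceil> + 1"
  have "2 / \<epsilon> \<le> real N" using real_nat_ceiling_ge[of "2 / \<epsilon>"] by (simp add: N_def)
  then have N: "0 < N" "2 \<le> \<epsilon> * real N" using assms by (simp_all add: N_def field_simps)
  define a where "a n = exp 1 * real N ^ N * (4 * exp (-3)) ^ n" for n :: nat
  define b where "b j = inverse ((real (Suc j))\<^sup>2)" for j :: nat
  have "4 * exp (-3) < (1::real)"
  proof -
    have "(1 + 3 / real (3::nat)) ^ 3 \<le> exp (3::real)" by (intro exp_ge_one_plus_x_over_n_power_n) auto
    then show ?thesis by (simp add: exp_minus field_simps)
  qed
  then have "summable a" unfolding a_def by (intro summable_mult summable_geometric) simp
  moreover have "summable b"
    using inverse_power_summable[of 2, where 'a=real] unfolding b_def by (subst summable_Suc_iff) simp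
  moreover have ab: "0 \<le> a n" "0 \<le> b j" for n j by (simp_all add: a_def b_def)
  ultimately have "(\<Sum>n. ennreal (a n)) * (\<Sum>j. ennreal (b j)) = ennreal (\<Sum>n. a n) * ennreal (\<Sum>j. b j)"
    by (simp add: suminf_ennreal2)
  then have "(\<Sum>n. \<Sum>j. ennreal (a n) * ennreal (b j)) < \<infinity>" by (simp add: ennreal_mult_less_top)
  moreover have "(\<Sum>n. \<Sum>j. ennreal (exp (- (max (real (Suc j) / 2 ^ n) 1 powr \<epsilon> * (real (Suc n))\<^sup>2))))
      \<le> (\<Sum>n. \<Sum>j. ennreal (a n) * ennreal (b j))"
  proof (intro suminf_le summableI)
    fix n j
    have "ennreal (exp (- (max (real (Suc j) / 2 ^ n) 1 powr \<epsilon> * (real (Suc n))\<^sup>2))) \<le> ennreal (a n * b j)"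
      unfolding a_def b_def by (intro ennreal_leI exp_neg_dyadic_le[OF N])
    then show "ennreal (exp (- (max (real (Suc j) / 2 ^ n) 1 powr \<epsilon> * (real (Suc n))\<^sup>2))) \<le> ennreal (a n) * ennreal (b j)"
      unfolding ennreal_mult[OF ab] .
  qed
  ultimately show ?thesis by (rule le_less_trans[rotated])
qed

context prob_space
begin

lemma emeasure_SUP_normalized_le:
  fixes \<Delta> :: "nat \<Rightarrow> nat \<Rightarrow> 'a \<Rightarrow> real" and w :: "nat \<Rightarrow> nat \<Rightarrow> real"
  assumes [measurable]: "\<And>n j. \<Delta> n j \<in> borel_measurable M" and w: "\<And>n j. 0 < w n j" and r: "0 < r"
  shows "emeasure M {\<omega>\<in>space M. ennreal r < (SUP n. SUP j. ennreal (\<bar>\<Delta> n j \<omega>\<bar> / w n j))}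
    \<le> (\<Sum>n. \<Sum>j. emeasure M {\<omega>\<in>space M. r * w n j < \<bar>\<Delta> n j \<omega>\<bar>})"
proof -
  define A where "A n j = {\<omega>\<in>space M. r * w n j < \<bar>\<Delta> n j \<omega>\<bar>}" for n j
  have A[measurable]: "A n j \<in> sets M" for n j unfolding A_def by measurable
  have "{\<omega>\<in>space M. ennreal r < (SUP n. SUP j. ennreal (\<bar>\<Delta> n j \<omega>\<bar> / w n j))} \<subseteq> (\<Union>n. \<Union>j. A n j)"
  proof safe
    fix \<omega> assume "\<omega> \<in> space M" "ennreal r < (SUP n. SUP j. ennreal (\<bar>\<Delta> n j \<omega>\<bar> / w n j))"
    then obtain n j where "r < \<bar>\<Delta> n j \<omega>\<bar> / w n j"
      using r by (auto simp: less_SUP_iff ennreal_less_iff)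
    then show "\<omega> \<in> (\<Union>n. \<Union>j. A n j)"
      using w[of n j] \<open>\<omega> \<in> space M\<close> by (auto simp: A_def pos_less_divide_eq)
  qed
  then have "emeasure M {\<omega>\<in>space M. ennreal r < (SUP n. SUP j. ennreal (\<bar>\<Delta> n j \<omega>\<bar> / w n j))}
      \<le> emeasure M (\<Union>n. \<Union>j. A n j)"
    by (intro emeasure_mono) auto
  also have "\<dots> \<le> (\<Sum>n. emeasure M (\<Union>j. A n j))"
    by (intro emeasure_subadditive_countably) auto
  also have "\<dots> \<le> (\<Sum>n. \<Sum>j. emeasure M (A n j))"
    by (intro suminf_le summableI emeasure_subadditive_countably) auto
  finally show ?thesis unfolding A_def .
qed

lemma SUP_normalized_tail:
  fixes \<Delta> :: "nat \<Rightarrow> nat \<Rightarrow> 'a \<Rightarrow> real" and w X :: "nat \<Rightarrow> nat \<Rightarrow> real"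
  assumes [measurable]: "\<And>n j. \<Delta> n j \<in> borel_measurable M"
    and w: "\<And>n j. 0 < w n j" and X: "\<And>n j. 1 \<le> X n j" and c: "0 < c"
    and tail: "\<And>n j r. 0 < r \<Longrightarrow> prob {\<omega>\<in>space M. r * w n j < \<bar>\<Delta> n j \<omega>\<bar>} \<le> 2 * exp (- (c * r\<^sup>2 * X n j))"
    and summable: "(\<Sum>n. \<Sum>j. ennreal (exp (- X n j))) < \<infinity>"
  obtains C where "0 < C"
    "\<And>r. 0 < r \<Longrightarrow> prob {\<omega>\<in>space M. ennreal r < (SUP n. SUP j. ennreal (\<bar>\<Delta> n j \<omega>\<bar> / w n j))} \<le> C * exp (- c * r\<^sup>2)"
proof
  define S where "S = enn2real (\<Sum>n. \<Sum>j. ennreal (exp (- X n j)))"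
  have S: "(\<Sum>n. \<Sum>j. ennreal (exp (- X n j))) = ennreal S" "0 \<le> S"
    using summable by (simp_all add: S_def less_top)
  show "0 < exp 1 * (2 * S + 1)" using S by simp
  fix r :: real assume r: "0 < r"
  let ?Z = "\<lambda>\<omega>. SUP n. SUP j. ennreal (\<bar>\<Delta> n j \<omega>\<bar> / w n j)"
  show "prob {\<omega>\<in>space M. ennreal r < ?Z \<omega>} \<le> exp 1 * (2 * S + 1) * exp (- c * r\<^sup>2)"
  proof (cases "1 \<le> c * r\<^sup>2")
    case True
    have bound: "emeasure M {\<omega>\<in>space M. r * w n j < \<bar>\<Delta> n j \<omega>\<bar>}
        \<le> ennreal (2 * exp (1 - c * r\<^sup>2)) * ennreal (exp (- X n j))" for n j
    proof -
      have "prob {\<omega>\<in>space M. r * w n j < \<bar>\<Delta> n j \<omega>\<bar>} \<le> 2 * exp (- (c * r\<^sup>2 * X n j))"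
        by (rule tail[OF r])
      also have "\<dots> \<le> 2 * (exp (1 - c * r\<^sup>2) * exp (- X n j))"
        using exp_neg_mult_le[OF True X] by simp
      finally show ?thesis by (simp add: emeasure_eq_measure ennreal_mult[symmetric] ennreal_leI)
    qed
    have "emeasure M {\<omega>\<in>space M. ennreal r < ?Z \<omega>}
        \<le> (\<Sum>n. \<Sum>j. emeasure M {\<omega>\<in>space M. r * w n j < \<bar>\<Delta> n j \<omega>\<bar>})"
      by (rule emeasure_SUP_normalized_le[OF _ w r]) simp
    also have "\<dots> \<le> (\<Sum>n. \<Sum>j. ennreal (2 * exp (1 - c * r\<^sup>2)) * ennreal (exp (- X n j)))"
      by (intro suminf_le summableI bound)
    also have "\<dots> = ennreal (2 * exp (1 - c * r\<^sup>2) * S)" by (simp add: S ennreal_mult)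
    finally have "prob {\<omega>\<in>space M. ennreal r < ?Z \<omega>} \<le> 2 * exp (1 - c * r\<^sup>2) * S"
      using S by (simp add: emeasure_eq_measure ennreal_le_iff)
    also have "\<dots> = exp 1 * (2 * S) * exp (- c * r\<^sup>2)" by (simp add: exp_diff exp_minus field_simps)
    also have "\<dots> \<le> exp 1 * (2 * S + 1) * exp (- c * r\<^sup>2)" by (intro mult_right_mono) auto
    finally show ?thesis .
  next
    case False
    have "prob {\<omega>\<in>space M. ennreal r < ?Z \<omega>} \<le> 1" by simp
    also have "\<dots> \<le> exp (1 + - c * r\<^sup>2)" using False by simp
    also have "\<dots> = exp 1 * 1 * exp (- c * r\<^sup>2)" by (simp add: mult_exp_exp)
    also have "\<dots> \<le> exp 1 * (2 * S + 1) * exp (- c * r\<^sup>2)"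
      using S by (intro mult_right_mono mult_left_mono) auto
    finally show ?thesis .
  qed
qed

lemma AE_finite_of_subgaussian_tail:
  fixes Z :: "'a \<Rightarrow> ennreal"
  assumes [measurable]: "Z \<in> borel_measurable M" and c: "0 < c"
    and tail: "\<And>r. 0 < r \<Longrightarrow> prob {\<omega>\<in>space M. ennreal r < Z \<omega>} \<le> C * exp (- c * r\<^sup>2)"
  shows "AE \<omega> in M. Z \<omega> \<noteq> \<infinity>"
proof -
  define N where "N = {\<omega>\<in>space M. Z \<omega> = \<infinity>}"
  have N[measurable]: "N \<in> sets M" unfolding N_def by measurable
  have "prob N \<le> C * exp (- c * r\<^sup>2)" if "0 < r" for r
  proof -
    have "N \<subseteq> {\<omega>\<in>space M. ennreal r < Z \<omega>}" by (auto simp: N_def)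
    then have "prob N \<le> prob {\<omega>\<in>space M. ennreal r < Z \<omega>}" by (intro finite_measure_mono) measurable
    then show ?thesis using tail[OF that] by linarith
  qed
  moreover have "((\<lambda>r. C * exp (- c * r\<^sup>2)) \<longlongrightarrow> 0) at_top" using c by real_asymp
  ultimately have "prob N \<le> 0"
    by (intro tendsto_lowerbound[of "\<lambda>r. C * exp (- c * r\<^sup>2)" 0 at_top]) (auto simp: eventually_at_top_dense)
  then have "emeasure M N = 0" by (simp add: emeasure_eq_measure measure_le_0_iff)
  then show ?thesis by (subst AE_iff_measurable[OF N]) (auto simp: N_def)
qed

lemma enn2real_mult_tail_le:
  fixes Z :: "'a \<Rightarrow> ennreal"
  assumes tail: "\<And>r. 0 < r \<Longrightarrow> prob {\<omega>\<in>space M. ennreal r < Z \<omega>} \<le> C * exp (- c * r\<^sup>2)"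
    and [measurable]: "Z \<in> borel_measurable M" and a: "0 < a" and u: "0 < u"
  shows "prob {\<omega>\<in>space M. u < a * enn2real (Z \<omega>)} \<le> C * exp (- (c / a\<^sup>2) * u\<^sup>2)"
proof -
  have "{\<omega>\<in>space M. u < a * enn2real (Z \<omega>)} \<subseteq> {\<omega>\<in>space M. ennreal (u / a) < Z \<omega>}"
  proof safe
    fix \<omega> assume "u < a * enn2real (Z \<omega>)"
    then have "u / a < enn2real (Z \<omega>)" using a by (simp add: pos_divide_less_eq mult.commute)
    then show "ennreal (u / a) < Z \<omega>"
      using a u by (cases "Z \<omega>" rule: ennreal_cases) (auto simp: ennreal_less_iff)
  qed
  then have "prob {\<omega>\<in>space M. u < a * enn2real (Z \<omega>)} \<le> prob {\<omega>\<in>space M. ennreal (u / a) < Z \<omega>}"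
    by (intro finite_measure_mono) measurable
  also have "\<dots> \<le> C * exp (- (c / a\<^sup>2) * u\<^sup>2)"
    using tail[of "u / a"] a u by (simp add: power_divide)
  finally show ?thesis .
qed

end

lemma dyadic_weight_ratio:
  fixes T K r \<alpha> \<epsilon> h d m :: real
  assumes "1 \<le> T" "0 < K" "0 < d"
  shows "(r * (T powr \<alpha> * (d powr h * m)))\<^sup>2 / (4 * (K * T powr (2 * \<alpha> - \<epsilon>) * d powr (2 * h)))
    = 1 / (4 * K) * r\<^sup>2 * (T powr \<epsilon> * m\<^sup>2)"
proof -
  have "(T powr \<alpha>)\<^sup>2 = T powr (2 * \<alpha> - \<epsilon>) * T powr \<epsilon>" "(d powr h)\<^sup>2 = d powr (2 * h)"
    by (simp_all add: power2_eq_square powr_add[symmetric])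
  then show ?thesis using assms by (simp add: power_mult_distrib field_simps)
qed

lemma enn2real_SUP_bound:
  fixes d w :: "nat \<Rightarrow> nat \<Rightarrow> real"
  assumes "(SUP n. SUP j. ennreal (\<bar>d n j\<bar> / w n j)) \<noteq> \<infinity>" "0 < w n j"
  shows "\<bar>d n j\<bar> \<le> enn2real (SUP n. SUP j. ennreal (\<bar>d n j\<bar> / w n j)) * w n j"
proof -
  have "ennreal (\<bar>d n j\<bar> / w n j) \<le> (SUP n. SUP j. ennreal (\<bar>d n j\<bar> / w n j))"
    by (meson SUP_upper UNIV_I order_trans)
  then have "enn2real (ennreal (\<bar>d n j\<bar> / w n j)) \<le> enn2real (SUP n. SUP j. ennreal (\<bar>d n j\<bar> / w n j))"
    using assms(1) by (intro enn2real_mono) (simp_all only: less_top[symmetric] infinity_ennreal_def not_False_eq_True)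
  then have "\<bar>d n j\<bar> / w n j \<le> enn2real (SUP n. SUP j. ennreal (\<bar>d n j\<bar> / w n j))"
    using assms(2) by simp
  then show ?thesis using assms(2) by (simp add: pos_divide_le_eq)
qed

lemma max_one_powr:
  fixes t \<alpha> :: real
  assumes "0 < t" "0 \<le> \<alpha>"
  shows "max t 1 powr \<alpha> = max (t powr \<alpha>) 1"
proof (cases "t \<le> 1")
  case True
  then have "t powr \<alpha> \<le> 1" using assms powr_mono2[of \<alpha> t 1] by simp
  then show ?thesis using True by (simp add: max_def)
next
  case False
  then have "1 \<le> t powr \<alpha>" using assms by (intro ge_one_powr_ge_zero) auto
  then show ?thesis using False by (simp add: max_def)
qed

lemma dyadic_chaining_SUP:
  fixes f :: "real \<Rightarrow> real" and \<alpha> h p t1 t2 :: real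
  assumes f: "continuous_on {0..} f" and \<alpha>: "0 \<le> \<alpha>" and h: "0 < h" "h \<le> 1" and p: "1 \<le> p"
    and Z: "(SUP n. SUP j. ennreal (\<bar>f (real (Suc j) / 2 ^ n) - f (real j / 2 ^ n)\<bar> / dyadic_weight \<alpha> h n j)) \<noteq> \<infinity>"
    and t: "0 \<le> t2" "t2 < t1" "t1 \<le> t2 + 1"
  shows "\<bar>f t1 - f t2\<bar> \<le> max (t1 powr \<alpha>) 1 * (t1 - t2) powr h * max (\<bar>ln (t1 - t2)\<bar> powr p) 1
    * (chaining_const h * enn2real (SUP n. SUP j.
        ennreal (\<bar>f (real (Suc j) / 2 ^ n) - f (real j / 2 ^ n)\<bar> / dyadic_weight \<alpha> h n j)))"
proof -
  let ?B = "enn2real (SUP n. SUP j. ennreal (\<bar>f (real (Suc j) / 2 ^ n) - f (real j / 2 ^ n)\<bar> / dyadic_weight \<alpha> h n j))"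
  have "\<bar>f (real (Suc j) / 2 ^ n) - f (real j / 2 ^ n)\<bar> \<le> ?B * dyadic_weight \<alpha> h n j" for n j
    by (rule enn2real_SUP_bound[OF Z dyadic_weight_pos])
  then have "\<bar>f t1 - f t2\<bar> \<le> chaining_const h * ?B * max t1 1 powr \<alpha> * (t1 - t2) powr h
      * max (\<bar>ln (t1 - t2)\<bar> powr p) 1"
    by (intro dyadic_chaining[OF f _ \<alpha> h p _ t]) (auto simp: mult.commute)
  moreover have "max t1 1 powr \<alpha> = max (t1 powr \<alpha>) 1" using t \<alpha> by (intro max_one_powr) auto
  ultimately show ?thesis by (simp add: ac_simps)
qed

lemma (in prob_space) subgaussian_dyadic_increments_modulus:
  fixes Y :: "real \<Rightarrow> 'a \<Rightarrow> real" and K \<alpha> \<epsilon> h p :: real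
  assumes Y: "\<And>t. 0 \<le> t \<Longrightarrow> Y t \<in> borel_measurable M"
    and Y_cont: "\<forall>\<omega>\<in>space M. continuous_on {0..} (\<lambda>t. Y t \<omega>)"
    and K: "0 < K" and \<alpha>: "0 \<le> \<alpha>" and \<epsilon>: "0 < \<epsilon>" and h: "0 < h" "h \<le> 1" and p: "1 \<le> p"
    and tail: "\<And>n j x. 0 < x \<Longrightarrow>
      prob {\<omega>\<in>space M. x < \<bar>Y (real (Suc j) / 2 ^ n) \<omega> - Y (real j / 2 ^ n) \<omega>\<bar>}
        \<le> 2 * exp (- x\<^sup>2 / (4 * (K * max (real (Suc j) / 2 ^ n) 1 powr (2 * \<alpha> - \<epsilon>) * (1 / 2 ^ n) powr (2 * h))))"
  shows "\<exists>\<eta>. \<eta> \<in> borel_measurable M \<and> (\<forall>\<omega>\<in>space M. \<eta> \<omega> \<ge> 0) \<and>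
           (AE \<omega> in M. \<forall>t1 t2. 0 \<le> t2 \<and> t2 < t1 \<and> t1 \<le> t2 + 1 \<longrightarrow>
              \<bar>Y t1 \<omega> - Y t2 \<omega>\<bar> \<le>
                max (t1 powr \<alpha>) 1 * (t1 - t2) powr h * max (\<bar>ln (t1 - t2)\<bar> powr p) 1 * \<eta> \<omega>) \<and>
           (\<exists>C1>0. \<exists>C2>0. \<forall>u>0. prob {\<omega>\<in>space M. \<eta> \<omega> > u} \<le> C1 * exp (- C2 * u\<^sup>2))"
proof -
  define \<Delta> where "\<Delta> n j \<omega> = Y (real (Suc j) / 2 ^ n) \<omega> - Y (real j / 2 ^ n) \<omega>" for n j \<omega>
  define w where "w = dyadic_weight \<alpha> h"
  define X where "X n j = max (real (Suc j) / 2 ^ n) 1 powr \<epsilon> * (real (Suc n))\<^sup>2" for n j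
  define Z where "Z \<omega> = (SUP n. SUP j. ennreal (\<bar>\<Delta> n j \<omega>\<bar> / w n j))" for \<omega>
  define c where "c = 1 / (4 * K)"
  have c: "0 < c" using K by (simp add: c_def)
  have \<Delta>[measurable]: "\<Delta> n j \<in> borel_measurable M" for n j
    unfolding \<Delta>_def using Y[of "real (Suc j) / 2 ^ n"] Y[of "real j / 2 ^ n"] by measurable
  have Z[measurable]: "Z \<in> borel_measurable M" unfolding Z_def by measurable
  have w: "0 < w n j" for n j by (simp add: w_def dyadic_weight_pos)
  have X: "1 \<le> X n j" for n j
    unfolding X_def using \<epsilon> by (intro mult_ge1_I ge_one_powr_ge_zero) auto
  have tail_w: "prob {\<omega>\<in>space M. r * w n j < \<bar>\<Delta> n j \<omega>\<bar>} \<le> 2 * exp (- (c * r\<^sup>2 * X n j))"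
    if "0 < r" for n j r
  proof -
    have "(r * w n j)\<^sup>2 / (4 * (K * max (real (Suc j) / 2 ^ n) 1 powr (2 * \<alpha> - \<epsilon>) * (1 / 2 ^ n) powr (2 * h)))
        = c * r\<^sup>2 * X n j"
      unfolding w_def dyadic_weight_def X_def c_def using K by (intro dyadic_weight_ratio) auto
    then show ?thesis using tail[of "r * w n j" j n] w[of n j] that by (simp add: \<Delta>_def)
  qed
  have summable: "(\<Sum>n. \<Sum>j. ennreal (exp (- X n j))) < \<infinity>"
    unfolding X_def by (rule summable_exp_neg_dyadic[OF \<epsilon>])
  obtain C where C: "0 < C" "\<And>r. 0 < r \<Longrightarrow> prob {\<omega>\<in>space M. ennreal r < Z \<omega>} \<le> C * exp (- c * r\<^sup>2)"
    unfolding Z_def using SUP_normalized_tail[OF \<Delta> w X c tail_w summable] by blast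
  have Z_finite: "AE \<omega> in M. Z \<omega> \<noteq> \<infinity>" using Z c C(2) by (rule AE_finite_of_subgaussian_tail)
  show ?thesis
  proof (intro exI[of _ "\<lambda>\<omega>. chaining_const h * enn2real (Z \<omega>)"] conjI)
    show "(\<lambda>\<omega>. chaining_const h * enn2real (Z \<omega>)) \<in> borel_measurable M" by measurable
    show "\<forall>\<omega>\<in>space M. 0 \<le> chaining_const h * enn2real (Z \<omega>)" using chaining_const_pos[of h] by simp
    show "AE \<omega> in M. \<forall>t1 t2. 0 \<le> t2 \<and> t2 < t1 \<and> t1 \<le> t2 + 1 \<longrightarrow> \<bar>Y t1 \<omega> - Y t2 \<omega>\<bar>
        \<le> max (t1 powr \<alpha>) 1 * (t1 - t2) powr h * max (\<bar>ln (t1 - t2)\<bar> powr p) 1 * (chaining_const h * enn2real (Z \<omega>))"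
      using Z_finite AE_space
    proof eventually_elim
      case (elim \<omega>)
      have cont: "continuous_on {0..} (\<lambda>t. Y t \<omega>)" using Y_cont elim(2) by blast
      have finite: "(SUP n. SUP j. ennreal (\<bar>Y (real (Suc j) / 2 ^ n) \<omega> - Y (real j / 2 ^ n) \<omega>\<bar>
          / dyadic_weight \<alpha> h n j)) \<noteq> \<infinity>"
        using elim(1) unfolding Z_def \<Delta>_def w_def .
      show ?case
        using dyadic_chaining_SUP[OF cont \<alpha> h p finite] unfolding Z_def \<Delta>_def w_def by blast
    qed
    show "\<exists>C1>0. \<exists>C2>0. \<forall>u>0. prob {\<omega>\<in>space M. chaining_const h * enn2real (Z \<omega>) > u} \<le> C1 * exp (- C2 * u\<^sup>2)"
    proof (rule exI[of _ C], intro conjI exI[of _ "c / (chaining_const h)\<^sup>2"] allI impI)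
      fix u :: real assume "0 < u"
      show "prob {\<omega>\<in>space M. chaining_const h * enn2real (Z \<omega>) > u}
          \<le> C * exp (- (c / (chaining_const h)\<^sup>2) * u\<^sup>2)"
        by (rule enn2real_mult_tail_le[OF _ Z chaining_const_pos \<open>0 < u\<close>]) (rule C(2))
    qed (use C c chaining_const_pos[of h] in auto)
  qed
qed

theorem theorem9:
  fixes M :: "'a measure" and H :: "real \<Rightarrow> real" and Y :: "real \<Rightarrow> 'a \<Rightarrow> real"
    and h1 h2 D \<kappa> :: real
  assumes H_cont: "continuous_on {0..} H"
    and H_range: "\<forall>t\<ge>0. 0 < H t \<and> H t < 1"
    and h12: "0 < h1" "h1 < h2" "h2 < 1"
    and H1: "\<forall>t\<ge>0. h1 \<le> H t \<and> H t \<le> h2"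
    and D_pos: "D > 0" and \<kappa>: "0 < \<kappa>" "\<kappa> \<le> 1"
    and H2: "\<forall>t s. 0 < s \<and> s \<le> t \<longrightarrow> \<bar>H t - H s\<bar> \<le> D * (t - s) powr \<kappa>"
    and Y_mbm: "harmonizable_mbm M H Y"
    and Y_cont: "\<forall>\<omega>\<in>space M. continuous_on {0..} (\<lambda>t. Y t \<omega>)"
  shows "\<forall>\<epsilon>>0. \<forall>p>2. \<exists>\<eta>. \<eta> \<in> borel_measurable M \<and> (\<forall>\<omega>\<in>space M. \<eta> \<omega> \<ge> 0) \<and>
           (AE \<omega> in M. \<forall>t1 t2. 0 \<le> t2 \<and> t2 < t1 \<and> t1 \<le> t2 + 1 \<longrightarrow>
              \<bar>Y t1 \<omega> - Y t2 \<omega>\<bar> \<le>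
                max (t1 powr (h2 + \<epsilon>)) 1 * (t1 - t2) powr (min h1 \<kappa>) *
                max (\<bar>ln (t1 - t2)\<bar> powr p) 1 * \<eta> \<omega>) \<and>
           (\<exists>C1>0. \<exists>C2>0. \<forall>u>0. measure M {\<omega>\<in>space M. \<eta> \<omega> > u} \<le> C1 * exp (- C2 * u\<^sup>2))"
proof (intro allI impI, goal_cases)
  case (1 \<epsilon> p)
  interpret prob_space M using Y_mbm by (simp add: harmonizable_mbm_def)
  have Hoelder: "\<And>t s. 0 \<le> s \<Longrightarrow> s \<le> t \<Longrightarrow> \<bar>H t - H s\<bar> \<le> D * (t - s) powr \<kappa>"
    using Hoelder_bound_at_zero[OF H_cont H2 \<kappa>(1)] by blast
  obtain K where K: "0 < K" and variance: "\<And>t s. 0 \<le> s \<Longrightarrow> s < t \<Longrightarrow> t \<le> s + 1 \<Longrightarrow>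
      mbm_cov H t t - 2 * mbm_cov H t s + mbm_cov H s s
        \<le> K * max t 1 powr (2 * h2 + \<epsilon>) * (t - s) powr (2 * min h1 \<kappa>)"
    using mbm_increment_variance_le[OF H1 h12(1,3) Hoelder \<open>0 < \<epsilon>\<close>] by blast
  have tail: "prob {\<omega>\<in>space M. x < \<bar>Y (real (Suc j) / 2 ^ n) \<omega> - Y (real j / 2 ^ n) \<omega>\<bar>}
      \<le> 2 * exp (- x\<^sup>2 / (4 * (K * max (real (Suc j) / 2 ^ n) 1 powr (2 * (h2 + \<epsilon>) - \<epsilon>)
                                  * (1 / 2 ^ n) powr (2 * min h1 \<kappa>))))" if "0 < x" for n j x
  proof (rule mbm_increment_tail_le[OF Y_mbm _ _ _ _ that])
    have "real (Suc j) / 2 ^ n - real j / 2 ^ n = 1 / 2 ^ n" by (simp add: diff_divide_distrib[symmetric])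
    then show "mbm_cov H (real (Suc j) / 2 ^ n) (real (Suc j) / 2 ^ n)
        - 2 * mbm_cov H (real (Suc j) / 2 ^ n) (real j / 2 ^ n) + mbm_cov H (real j / 2 ^ n) (real j / 2 ^ n)
      \<le> K * max (real (Suc j) / 2 ^ n) 1 powr (2 * (h2 + \<epsilon>) - \<epsilon>) * (1 / 2 ^ n) powr (2 * min h1 \<kappa>)"
      using variance[of "real j / 2 ^ n" "real (Suc j) / 2 ^ n"] by (simp add: field_simps)
  qed (use K in auto)
  show ?case
    using Y_mbm h12 \<kappa> 1 unfolding harmonizable_mbm_def
    by (intro subgaussian_dyadic_increments_modulus[OF _ Y_cont K _ _ _ _ _ tail]) auto
qed

end
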